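(* Let $C\subseteq\mathbb{F}_q^{2n}$ be a symplectic self-orthogonal $\mathbb{F}_q$-linear code, let $Q(C)\subseteq\mathbb{C}^{q^n}$ be the stabilizer code defined by $C$, and let $I\subsetneq\{1,\dots,n\}$. Then $Q(C)$ corrects erasures at $I$ if and only if \[\sigma_I(C)=\sigma_I\left(C^{\perp_s}\right).\]
   Context: $q$ is a power of a prime $p$, $\mathbb{F}_q$ is the field with $q$ elements. Vectors of $\mathbb{F}_q^{2n}$ are written $(\mathbf a|\mathbf b)$ with $\mathbf a,\mathbf b\in\mathbb{F}_q^n$, and the coordinate pair $(a_j,b_j)$ is indexed by $j\in\{1,\dots,n\}$. The symplectic form is $(\mathbf a|\mathbf b)\cdot_s(\mathbf c|\mathbf d)=\mathbf a\cdot\mathbf d-\mathbf b\cdot\mathbf c$ (Euclidean dot products); $C^{\perp_s}$ is the dual of $C$ for $\cdot_s$, and $C$ is symplectic self-orthogonal if $C\subseteq C^{\perp_s}$. For $R\subseteq\{1,\dots,n\}$ and $\mathbf y=(\mathbf a|\mathbf b)$, $\pi_R(\mathbf y)=(a_j|b_j)_{j\in R}$; the shortening of a code $D$ at $R$ is $\sigma_R(D)=\{\pi_R(\mathbf y):\mathbf y=(\mathbf a|\mathbf b)\in D,\ \mathrm{supp}(\mathbf a)\cup\mathrm{supp}(\mathbf b)\subseteq R\}$ (the set $R$ indicates the coordinates kept). Let $\xi=e^{2\pi\iota/p}$; on $\mathbb{C}^q$ with basis $\{|x\rangle:x\in\mathbb F_q\}$ let $X(a)|x\rangle=|x+a\rangle$,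 $Z(b)|x\rangle=\xi^{\mathrm{tr}_{q/p}(bx)}|x\rangle$, and $E_{(\mathbf a,\mathbf b)}=\bigotimes_{j=1}^n X(a_j)Z(b_j)$ on $\mathbb C^{q^n}=(\mathbb C^q)^{\otimes n}$. The stabilizer code $Q(C)$ is the common eigenspace $\{v: Ev=\lambda(E)v\ \forall E\in S\}$, where $S$ is the commutative group generated by the scalars $\xi^\ell\mathcal I$ and the operators $E_{(\mathbf a,\mathbf b)}$, $(\mathbf a|\mathbf b)\in C$, and $\lambda$ is a fixed character of $S$ with $\lambda(\xi\mathcal I)=\xi$. Erasures: let $\epsilon_1=\{X(a)Z(b):a,b\in\mathbb F_q\}$ and $\Gamma(\rho)=q^{-2}\sum_{E\in\epsilon_1}E\rho E^\dagger$ (completely depolarizing channel). For $I\subseteq\{1,\dots,n\}$, $\Gamma^I$ applies $\Gamma$ to the qudits indexed by $I$ and the identity to the others. A quantum code $Q$ corrects erasures at $I$ if there exists a trace-preserving quantum operation $\mathcal R$ with $\mathcal R\circ\Gamma^I(|\varphi\rangle\langle\varphi|)=|\varphi\rangle\langle\varphi|$ for all $|\varphi\rangle\in Q$. *)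

theory Defs
  imports "HOL-Analysis.Analysis"
begin

text \<open>Finite field F_q is modelled by a type 'a of class finite and field;
  q = CARD('a), p = CHAR('a). Coordinates are indexed by 1..n.\<close>

definition fq_vecs :: "nat \<Rightarrow> (nat \<Rightarrow> 'a::zero) set" where
  "fq_vecs n = {a. \<forall>j. j \<notin> {1..n} \<longrightarrow> a j = 0}"

text \<open>Vectors (a|b) of F_q^{2n} as pairs of coordinate functions.\<close>
definition sympl_vecs :: "nat \<Rightarrow> ((nat \<Rightarrow> 'a::zero) \<times> (nat \<Rightarrow> 'a)) set" where
  "sympl_vecs n = fq_vecs n \<times> fq_vecs n"

definition linear_code :: "nat \<Rightarrow> ((nat \<Rightarrow> 'a::field) \<times> (nat \<Rightarrow> 'a)) set \<Rightarrow> bool" where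
  "linear_code n C \<longleftrightarrow> C \<subseteq> sympl_vecs n \<and> (\<lambda>j. 0, \<lambda>j. 0) \<in> C \<and>
     (\<forall>x\<in>C. \<forall>y\<in>C. (\<lambda>j. fst x j + fst y j, \<lambda>j. snd x j + snd y j) \<in> C) \<and>
     (\<forall>c. \<forall>x\<in>C. (\<lambda>j. c * fst x j, \<lambda>j. c * snd x j) \<in> C)"

definition sympl_form :: "nat \<Rightarrow> (nat \<Rightarrow> 'a::field) \<times> (nat \<Rightarrow> 'a) \<Rightarrow> (nat \<Rightarrow> 'a) \<times> (nat \<Rightarrow> 'a) \<Rightarrow> 'a" where
  "sympl_form n x y = (\<Sum>j\<in>{1..n}. fst x j * snd y j) - (\<Sum>j\<in>{1..n}. snd x j * fst y j)"

definition sympl_dual :: "nat \<Rightarrow> ((nat \<Rightarrow> 'a::field) \<times> (nat \<Rightarrow> 'a)) set \<Rightarrow> ((nat \<Rightarrow> 'a) \<times> (nat \<Rightarrow> 'a)) set" where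
  "sympl_dual n C = {y \<in> sympl_vecs n. \<forall>x\<in>C. sympl_form n x y = 0}"

definition sympl_self_orth :: "nat \<Rightarrow> ((nat \<Rightarrow> 'a::field) \<times> (nat \<Rightarrow> 'a)) set \<Rightarrow> bool" where
  "sympl_self_orth n C \<longleftrightarrow> C \<subseteq> sympl_dual n C"

text \<open>Projection pi_R: keep the coordinates in R (others are set to 0, i.e. forgotten).\<close>
definition proj :: "nat set \<Rightarrow> (nat \<Rightarrow> 'a::zero) \<times> (nat \<Rightarrow> 'a) \<Rightarrow> (nat \<Rightarrow> 'a) \<times> (nat \<Rightarrow> 'a)" where
  "proj R y = (\<lambda>j. if j \<in> R then fst y j else 0, \<lambda>j. if j \<in> R then snd y j else 0)"

definition shorten :: "nat set \<Rightarrow> ((nat \<Rightarrow> 'a::zero) \<times> (nat \<Rightarrow> 'a)) set \<Rightarrow> ((nat \<Rightarrow> 'a) \<times> (nat \<Rightarrow> 'a)) set" where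
  "shorten R D = {proj R y | y. y \<in> D \<and> {j. fst y j \<noteq> 0} \<union> {j. snd y j \<noteq> 0} \<subseteq> R}"

definition ext_deg :: "'a::{finite,field} itself \<Rightarrow> nat" where
  "ext_deg T = (THE m. CHAR('a) ^ m = CARD('a))"

definition trace :: "'a::{finite,field} \<Rightarrow> 'a" where
  "trace x = (\<Sum>i<ext_deg TYPE('a). x ^ (CHAR('a) ^ i))"

definition trace_nat :: "'a::{finite,field} \<Rightarrow> nat" where
  "trace_nat x = (THE k. k < CHAR('a) \<and> of_nat k = trace x)"

definition xi :: "'a::{finite,field} itself \<Rightarrow> complex" where
  "xi T = cis (2 * pi / real CHAR('a))"

definition chi :: "'a::{finite,field} \<Rightarrow> complex" where
  "chi x = xi TYPE('a) ^ trace_nat x"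

text \<open>Basis |x> indexed by x in F_q^n; operators are matrices indexed by basis
  vectors (canonically zero outside the basis), vectors are functions on the basis
  (zero outside).\<close>

definition basis_idx :: "nat \<Rightarrow> (nat \<Rightarrow> 'a::zero) set" where
  "basis_idx n = fq_vecs n"

type_synonym 'a qop = "(nat \<Rightarrow> 'a) \<Rightarrow> (nat \<Rightarrow> 'a) \<Rightarrow> complex"
type_synonym 'a qvec = "(nat \<Rightarrow> 'a) \<Rightarrow> complex"

definition canon :: "nat \<Rightarrow> 'a::zero qop \<Rightarrow> 'a qop" where
  "canon n M = (\<lambda>x y. if x \<in> basis_idx n \<and> y \<in> basis_idx n then M x y else 0)"

definition qvecs :: "nat \<Rightarrow> 'a::zero qvec set" where
  "qvecs n = {v. \<forall>x. x \<notin> basis_idx n \<longrightarrow> v x = 0}"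

definition op_mult :: "nat \<Rightarrow> 'a::zero qop \<Rightarrow> 'a qop \<Rightarrow> 'a qop" where
  "op_mult n A B = canon n (\<lambda>x y. \<Sum>z\<in>basis_idx n. A x z * B z y)"

definition op_adj :: "nat \<Rightarrow> 'a::zero qop \<Rightarrow> 'a qop" where
  "op_adj n A = canon n (\<lambda>x y. cnj (A y x))"

definition op_id :: "nat \<Rightarrow> 'a::zero qop" where
  "op_id n = canon n (\<lambda>x y. if x = y then 1 else 0)"

definition op_smult :: "nat \<Rightarrow> complex \<Rightarrow> 'a::zero qop \<Rightarrow> 'a qop" where
  "op_smult n c A = canon n (\<lambda>x y. c * A x y)"

definition op_add :: "nat \<Rightarrow> 'a::zero qop \<Rightarrow> 'a qop \<Rightarrow> 'a qop" where
  "op_add n A B = canon n (\<lambda>x y. A x y + B x y)"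

definition op_apply :: "nat \<Rightarrow> 'a::zero qop \<Rightarrow> 'a qvec \<Rightarrow> 'a qvec" where
  "op_apply n A v = (\<lambda>x. if x \<in> basis_idx n then (\<Sum>y\<in>basis_idx n. A x y * v y) else 0)"

definition outer :: "nat \<Rightarrow> 'a::zero qvec \<Rightarrow> 'a qop" where
  "outer n v = canon n (\<lambda>x y. v x * cnj (v y))"

text \<open>E_(a,b) = tensor_j X(a_j) Z(b_j); X(a)Z(b)|y> = xi^tr(b y) |y + a>, so
  <x| E_(a,b) |y> = [x = y + a] * prod_j xi^tr(b_j y_j).\<close>
definition pauli :: "nat \<Rightarrow> (nat \<Rightarrow> 'a::{finite,field}) \<times> (nat \<Rightarrow> 'a) \<Rightarrow> 'a qop" where
  "pauli n ab = canon n (\<lambda>x y. if x = (\<lambda>j. y j + fst ab j)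
       then (\<Prod>j\<in>{1..n}. chi (snd ab j * y j)) else 0)"

inductive_set stab_group :: "nat \<Rightarrow> ((nat \<Rightarrow> 'a::{finite,field}) \<times> (nat \<Rightarrow> 'a)) set \<Rightarrow> 'a qop set"
  for n C where
  scal: "op_smult n (xi TYPE('a) ^ l) (op_id n) \<in> stab_group n C"
| gen: "c \<in> C \<Longrightarrow> pauli n c \<in> stab_group n C"
| mult: "A \<in> stab_group n C \<Longrightarrow> B \<in> stab_group n C \<Longrightarrow> op_mult n A B \<in> stab_group n C"
| inv: "A \<in> stab_group n C \<Longrightarrow> op_adj n A \<in> stab_group n C"

definition stab_character :: "nat \<Rightarrow> ((nat \<Rightarrow> 'a::{finite,field}) \<times> (nat \<Rightarrow> 'a)) set \<Rightarrow> ('a qop \<Rightarrow> complex) \<Rightarrow> bool" where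
  "stab_character n C lam \<longleftrightarrow>
     (\<forall>A\<in>stab_group n C. lam A \<noteq> 0) \<and>
     (\<forall>A\<in>stab_group n C. \<forall>B\<in>stab_group n C. lam (op_mult n A B) = lam A * lam B) \<and>
     lam (op_smult n (xi TYPE('a)) (op_id n)) = xi TYPE('a)"

definition stab_code :: "nat \<Rightarrow> ((nat \<Rightarrow> 'a::{finite,field}) \<times> (nat \<Rightarrow> 'a)) set \<Rightarrow> ('a qop \<Rightarrow> complex) \<Rightarrow> 'a qvec set" where
  "stab_code n C lam = {v \<in> qvecs n. \<forall>E\<in>stab_group n C. op_apply n E v = (\<lambda>x. lam E * v x)}"

definition pauli_at :: "nat \<Rightarrow> nat \<Rightarrow> 'a::{finite,field} \<Rightarrow> 'a \<Rightarrow> 'a qop" where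
  "pauli_at n j a b = pauli n (\<lambda>k. if k = j then a else 0, \<lambda>k. if k = j then b else 0)"

definition op_sum :: "nat \<Rightarrow> ('i \<Rightarrow> 'a::zero qop) \<Rightarrow> 'i set \<Rightarrow> 'a qop" where
  "op_sum n f S = canon n (\<lambda>x y. \<Sum>i\<in>S. f i x y)"

definition depol_at :: "nat \<Rightarrow> nat \<Rightarrow> 'a::{finite,field} qop \<Rightarrow> 'a qop" where
  "depol_at n j rho = op_smult n (1 / of_nat (CARD('a))^2)
     (op_sum n (\<lambda>(a,b). op_mult n (op_mult n (pauli_at n j a b) rho) (op_adj n (pauli_at n j a b))) UNIV)"

text \<open>Gamma^I: Gamma on each qudit in I (these commute), identity on the others.\<close>
definition erasure_channel :: "nat \<Rightarrow> nat set \<Rightarrow> 'a::{finite,field} qop \<Rightarrow> 'a qop" where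
  "erasure_channel n I rho = foldr (depol_at n) (sorted_list_of_set I) (canon n rho)"

definition kraus_tp :: "nat \<Rightarrow> 'a::zero qop list \<Rightarrow> bool" where
  "kraus_tp n Ks \<longleftrightarrow> op_sum n (\<lambda>i. op_mult n (op_adj n (Ks ! i)) (Ks ! i)) {..<length Ks} = op_id n"

definition kraus_apply :: "nat \<Rightarrow> 'a::zero qop list \<Rightarrow> 'a qop \<Rightarrow> 'a qop" where
  "kraus_apply n Ks rho = op_sum n (\<lambda>i. op_mult n (op_mult n (Ks ! i) rho) (op_adj n (Ks ! i))) {..<length Ks}"

definition corrects_erasures :: "nat \<Rightarrow> 'a::{finite,field} qvec set \<Rightarrow> nat set \<Rightarrow> bool" where
  "corrects_erasures n Q I \<longleftrightarrow>
     (\<exists>Ks. kraus_tp n Ks \<and>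
        (\<forall>\<phi>\<in>Q. kraus_apply n Ks (erasure_channel n I (outer n \<phi>)) = outer n \<phi>))"

end

(*
  The code projector P = |C|^-1 sum_(c in C) lambda(E_c)^-1 E_c projects onto Q(C), and the
  sandwich P E_u P equals lambda(E_u) P for u in C and vanishes for u outside the symplectic
  dual of C. With V_I the set of vectors supported on I, the erasure channel Gamma^I is the
  Pauli twirl rho |-> |V_I|^-1 sum_(u in V_I) E_u rho E_u^dagger.

  If sigma_I(C) = sigma_I(C^perp), every u in V_I lies in C or outside C^perp, so all the
  sandwiches P E_e^dagger E_g P (e, g in V_I) are multiples of P. Then T = k^-1 sum_(e in V_I)
  E_e P E_e^dagger, where k = |C cap V_I|, is a projector, and the Kraus operators
  k^(-1/2) P E_e^dagger (e in V_I) together with 1 - T reverse the channel on Q(C).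

  Conversely, a vector L in V_I that lies in C^perp but not in C gives a Pauli operator E_L
  that commutes with P and is absorbed by the channel. A recovery map then forces E_L to fix
  every state of Q(C) up to a phase, and by polarization E_L P = gamma P. Taking traces,
  tr P = tr (E_L^dagger E_L P) = gamma tr (E_L^dagger P) = 0 because L is not in C, which
  contradicts tr P = q^n / |C|.
*)
theory Submission
  imports Defs "HOL-Computational_Algebra.Polynomial"
begin

section \<open>Finite fields, the trace and the additive character\<close>

lemma CHAR_prime_finite_field: "prime CHAR('a::{finite,field})"
  by (rule prime_CHAR_semidom) (rule finite_imp_CHAR_pos, simp)

lemma CHAR_ge_2: "CHAR('a::{finite,field}) \<ge> 2"
  using CHAR_prime_finite_field[where 'a='a] prime_ge_2_nat by blast

lemma of_nat_mod_CHAR: "(of_nat (i mod CHAR('a)) :: 'a::semiring_1) = of_nat i"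
proof -
  have "(of_nat i :: 'a) = of_nat (i mod CHAR('a) + CHAR('a) * (i div CHAR('a)))"
    by simp
  then show ?thesis
    by (simp only: of_nat_add of_nat_mult of_nat_CHAR mult_zero_left add_0_right)
qed

lemma of_nat_inj_below_CHAR:
  assumes "i < CHAR('a)" "j < CHAR('a)" "(of_nat i :: 'a::ring_1) = of_nat j"
  shows "i = j"
proof (rule ccontr)
  have False if "a < b" "b < CHAR('a)" "(of_nat a :: 'a) = of_nat b" for a b
  proof -
    have "CHAR('a) dvd b - a"
      using that by (simp flip: of_nat_eq_0_iff_char_dvd)
    then show False
      using that dvd_imp_le[of "CHAR('a)" "b - a"] by linarith
  qed
  moreover assume "i \<noteq> j"
  ultimately show False
    using assms by (metis linorder_neqE_nat)
qed

lemma of_nat_invertible_in_prime_field: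
  assumes "(of_nat d :: 'a::{finite,field}) \<noteq> 0"
  shows "\<exists>e. of_nat e * (of_nat d :: 'a) = 1"
proof -
  have "coprime d CHAR('a)"
    using assms prime_imp_coprime_nat[OF CHAR_prime_finite_field[where 'a='a], of d]
    by (simp add: of_nat_eq_0_iff_char_dvd coprime_commute)
  moreover have "d \<noteq> 0"
    using assms by (metis of_nat_0)
  ultimately obtain e y where "d * e = CHAR('a) * y + 1"
    using bezout_nat[of d "CHAR('a)"] by auto
  then have "(of_nat (d * e) :: 'a) = 1"
    by simp
  then show ?thesis
    by (auto simp: mult.commute)
qed

lemma power_card_finite_field: "x ^ CARD('a) = (x :: 'a::{finite,field})"
proof (cases "x = 0")
  case True
  then show ?thesis
    using finite_UNIV_card_ge_0[where 'a='a] by simp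
next
  case False
  let ?U = "UNIV - {0 :: 'a}"
  have "bij_betw ((*) x) ?U ?U"
    by (rule bij_betwI[where g = "\<lambda>y. y / x"]) (use False in auto)
  then have "(\<Prod>y\<in>?U. x * y) = (\<Prod>y\<in>?U. y)"
    using prod.reindex_bij_betw[where g = "\<lambda>y. y"] by blast
  then have "(\<Prod>y\<in>?U. y) = (\<Prod>y\<in>?U. x * y)"
    by (rule sym)
  also have "\<dots> = x ^ card ?U * (\<Prod>y\<in>?U. y)"
    by (simp only: prod.distrib prod_constant)
  finally have "x ^ card ?U = 1"
    using mult_cancel_right1[of "\<Prod>y\<in>?U. y"] by simp
  moreover have "CARD('a) = Suc (card ?U)"
    using finite_UNIV_card_ge_0[where 'a='a] by (simp add: card_Diff_singleton)
  ultimately show ?thesis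
    by (simp only: power_Suc2 mult_1)
qed

definition add_closed :: "'a::{finite,field} set \<Rightarrow> bool" where
  "add_closed W \<longleftrightarrow> 0 \<in> W \<and> (\<forall>x\<in>W. \<forall>y\<in>W. x + y \<in> W)"

lemma add_closed_of_nat_mult: "add_closed W \<Longrightarrow> w \<in> W \<Longrightarrow> of_nat k * w \<in> W"
  by (induction k) (auto simp: add_closed_def distrib_right)

lemma add_closed_diff:
  assumes W: "add_closed W" and "v \<in> W" "w \<in> W"
  shows "v - w \<in> W"
proof -
  have "(of_nat (CHAR('a) - 1) :: 'a) = - 1"
    using CHAR_ge_2[where 'a='a] by simp
  then have "- w = of_nat (CHAR('a) - 1) * w"
    by simp
  then have "v + - w \<in> W"
    using assms add_closed_of_nat_mult[OF W, of w "CHAR('a) - 1"] by (simp add: add_closed_def)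
  then show ?thesis
    by simp
qed

lemma add_closed_translate_inj:
  fixes W :: "'a::{finite,field} set"
  assumes W: "add_closed W" and x: "x \<notin> W" and "w \<in> W" "w' \<in> W"
    and "i < CHAR('a)" "j < CHAR('a)" and eq: "w + of_nat i * x = w' + of_nat j * x"
  shows "i = j"
  using assms(3-7)
proof (induction i j arbitrary: w w' rule: linorder_wlog)
  case (le i j)
  show ?case
  proof (rule ccontr)
    assume "i \<noteq> j"
    let ?d = "of_nat (j - i) :: 'a"
    have "\<not> CHAR('a) dvd (j - i)"
      using le \<open>i \<noteq> j\<close> by (auto dest: dvd_imp_le)
    then obtain e where e: "of_nat e * ?d = 1"
      using of_nat_invertible_in_prime_field by (metis of_nat_eq_0_iff_char_dvd)
    have "?d * x = w - w'"
      using le by (simp add: algebra_simps)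
    then have "x = of_nat e * (w - w')"
      using e by (metis mult.assoc mult_1)
    then have "x \<in> W"
      using add_closed_of_nat_mult[OF W add_closed_diff[OF W]] le by simp
    with x show False ..
  qed
qed (metis)

lemma inj_on_add_closed_translates:
  fixes W :: "'a::{finite,field} set"
  assumes W: "add_closed W" and x: "x \<notin> W"
  shows "inj_on (\<lambda>(w, i). w + of_nat i * x) (W \<times> {..<CHAR('a)})"
proof (rule inj_onI)
  fix u v
  assume uv: "u \<in> W \<times> {..<CHAR('a)}" "v \<in> W \<times> {..<CHAR('a)}"
    and eq: "(\<lambda>(w, i). w + of_nat i * x) u = (\<lambda>(w, i). w + of_nat i * x) v"
  obtain w i w' j where u: "u = (w, i)" and v: "v = (w', j)"
    by (cases u, cases v)
  with uv eq have "i = j"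
    using add_closed_translate_inj[OF W x, of w w' i j] by simp
  with eq u v show "u = v"
    by simp
qed

lemma add_closed_extend:
  fixes W :: "'a::{finite,field} set"
  assumes W: "add_closed W" and x: "x \<notin> W"
  defines "W' \<equiv> (\<lambda>(w, i). w + of_nat i * x) ` (W \<times> {..<CHAR('a)})"
  shows "add_closed W'" and "card W' = CHAR('a) * card W"
proof -
  let ?f = "\<lambda>(w, i). w + of_nat i * x"
  show "card W' = CHAR('a) * card W"
    using inj_on_add_closed_translates[OF W x]
    by (simp add: W'_def card_image card_cartesian_product)
  have "0 \<in> W'"
  proof -
    have "(0, 0) \<in> W \<times> {..<CHAR('a)}"
      using W CHAR_ge_2[where 'a='a] by (simp add: add_closed_def)
    then have "?f (0, 0) \<in> W'"
      unfolding W'_def by (rule imageI)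
    then show ?thesis
      by simp
  qed
  moreover have "y + z \<in> W'" if yz_in: "y \<in> W'" "z \<in> W'" for y z
  proof -
    obtain w i w' j where "w \<in> W" "w' \<in> W"
      and yz: "y = w + of_nat i * x" "z = w' + of_nat j * x"
      using yz_in by (auto simp: W'_def)
    then have "(w + w', (i + j) mod CHAR('a)) \<in> W \<times> {..<CHAR('a)}"
      using W CHAR_ge_2[where 'a='a] by (simp add: add_closed_def)
    moreover have "y + z = ?f (w + w', (i + j) mod CHAR('a))"
      by (simp add: yz of_nat_mod_CHAR algebra_simps)
    ultimately show ?thesis
      unfolding W'_def by (rule rev_image_eqI)
  qed
  ultimately show "add_closed W'"
    by (simp add: add_closed_def)
qed

lemma card_finite_field_CHAR_power: "\<exists>m. CHAR('a::{finite,field}) ^ m = CARD('a)"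
proof -
  have "\<exists>m. CHAR('a) ^ m = CARD('a)"
    if "add_closed W" "card W = CHAR('a) ^ k" for W :: "'a set" and k
    using that
  proof (induction "CARD('a) - card W" arbitrary: W k rule: less_induct)
    case less
    show ?case
    proof (cases "W = UNIV")
      case False
      then obtain x where x: "x \<notin> W"
        by blast
      let ?W' = "(\<lambda>(w, i). w + of_nat i * x) ` (W \<times> {..<CHAR('a)})"
      have card: "card ?W' = CHAR('a) ^ Suc k"
        using add_closed_extend(2)[OF less.prems(1) x] less.prems(2) by simp
      have "card ?W' \<le> CARD('a)"
        by (rule card_mono) auto
      moreover have "card W < card ?W'"
        using card less.prems(2) CHAR_ge_2[where 'a='a] by simp
      ultimately have "CARD('a) - card ?W' < CARD('a) - card W"
        by linarith
      then show ?thesis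
        using less.hyps add_closed_extend(1)[OF less.prems(1) x] card by blast
    qed (use less.prems in auto)
  qed
  moreover have "add_closed {0::'a}" and "card {0::'a} = CHAR('a) ^ 0"
    by (simp_all add: add_closed_def)
  ultimately show ?thesis
    by blast
qed

text \<open>\<open>ext_deg\<close> is defined by \<open>THE\<close>, so it is meaningful only once \<open>q = p\<^sup>m\<close> is known.\<close>
lemma CHAR_power_ext_deg: "CHAR('a::{finite,field}) ^ ext_deg TYPE('a) = CARD('a)"
proof -
  obtain m where m: "CHAR('a) ^ m = CARD('a)"
    using card_finite_field_CHAR_power by blast
  have "\<exists>!m. CHAR('a) ^ m = CARD('a)"
  proof (rule ex1I[of _ m])
    fix m' assume "CHAR('a) ^ m' = CARD('a)"
    moreover have "1 < CHAR('a)"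
      using CHAR_ge_2[where 'a='a] by simp
    ultimately show "m' = m"
      using m power_inject_exp by metis
  qed (rule m)
  then show ?thesis
    unfolding ext_deg_def by (rule theI')
qed

lemma ext_deg_pos: "ext_deg TYPE('a::{finite,field}) > 0"
proof (rule ccontr)
  assume "\<not> ?thesis"
  then have "CARD('a) = 1"
    using CHAR_power_ext_deg[where 'a='a] by simp
  then obtain a :: 'a where "UNIV = {a}"
    using card_1_singletonE by blast
  then show False
    by (metis UNIV_I singletonD zero_neq_one)
qed

lemma trace_add: "trace (x + y) = trace x + trace (y::'a::{finite,field})"
  unfolding trace_def by (simp add: freshmans_dream' CHAR_prime_finite_field sum.distrib)

lemma trace_0: "trace (0::'a::{finite,field}) = 0"
  unfolding trace_def using CHAR_ge_2[where 'a='a] by (simp add: power_0_left)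

lemma trace_power_CHAR: "trace x ^ CHAR('a) = trace (x::'a::{finite,field})"
proof -
  let ?p = "CHAR('a)"
  obtain k where k: "ext_deg TYPE('a) = Suc k"
    using ext_deg_pos[where 'a='a] gr0_implies_Suc by blast
  define f where "f i = x ^ (?p ^ i)" for i
  have "trace x ^ ?p = (\<Sum>i<Suc k. f i ^ ?p)"
    unfolding trace_def k f_def by (rule freshmans_dream_sum) (simp_all add: CHAR_prime_finite_field)
  also have "\<dots> = (\<Sum>i<Suc k. f (Suc i))"
    by (simp add: f_def power_mult[symmetric] mult.commute)
  also have "f (Suc k) = f 0"
    using CHAR_power_ext_deg[where 'a='a] power_card_finite_field[of x] by (simp add: f_def k)
  then have "(\<Sum>i<Suc k. f (Suc i)) = f 0 + (\<Sum>i<k. f (Suc i))"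
    by (simp add: add.commute)
  also have "\<dots> = (\<Sum>i<Suc k. f i)"
    by (rule sum.lessThan_Suc_shift[symmetric])
  finally show ?thesis
    by (simp add: trace_def k f_def)
qed

text \<open>The prime field is the set of roots of \<open>X^p - X\<close>.\<close>
lemma power_CHAR_fixed_imp_of_nat:
  fixes y :: "'a::{finite,field}"
  assumes "y ^ CHAR('a) = y"
  shows "\<exists>k<CHAR('a). of_nat k = y"
proof -
  let ?p = "CHAR('a)"
  define f :: "'a poly" where "f = monom 1 ?p - monom 1 1"
  have poly_f: "poly f z = z ^ ?p - z" for z
    by (simp add: f_def poly_monom)
  have "coeff f ?p = 1"
    using CHAR_ge_2[where 'a='a] by (simp add: f_def)
  then have f0: "f \<noteq> 0"
    by auto
  have "degree f \<le> ?p"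
    unfolding f_def using CHAR_ge_2[where 'a='a]
    by (intro degree_diff_le) (auto intro: order.trans[OF degree_monom_le])
  then have "card {z. poly f z = 0} \<le> ?p"
    using card_poly_roots_bound[OF f0] by linarith
  moreover have sub: "of_nat ` {..<?p} \<subseteq> {z::'a. poly f z = 0}"
  proof -
    have "(of_nat k :: 'a) ^ ?p = of_nat k" for k
      using CHAR_ge_2[where 'a='a]
      by (induction k) (simp_all add: freshmans_dream CHAR_prime_finite_field power_0_left)
    then show ?thesis
      by (auto simp: poly_f)
  qed
  moreover have "card (of_nat ` {..<?p} :: 'a set) = ?p"
    by (subst card_image) (auto intro: inj_onI of_nat_inj_below_CHAR)
  ultimately have "of_nat ` {..<?p} = {z::'a. poly f z = 0}"
    using card_mono[OF poly_roots_finite[OF f0] sub]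
    by (intro card_subset_eq poly_roots_finite[OF f0]) auto
  moreover have "poly f y = 0"
    using assms by (simp add: poly_f)
  ultimately show ?thesis
    by (metis (mono_tags, lifting) imageE lessThan_iff mem_Collect_eq)
qed

lemma trace_nat_spec: "trace_nat x < CHAR('a) \<and> of_nat (trace_nat x) = trace (x::'a::{finite,field})"
proof -
  have "\<exists>!k. k < CHAR('a) \<and> (of_nat k :: 'a) = trace x"
    using power_CHAR_fixed_imp_of_nat[OF trace_power_CHAR[of x]] of_nat_inj_below_CHAR[where 'a='a]
    by metis
  then show ?thesis
    unfolding trace_nat_def by (rule theI')
qed

lemma trace_nat_eqI:
  "k < CHAR('a) \<Longrightarrow> of_nat k = trace x \<Longrightarrow> trace_nat (x::'a::{finite,field}) = k"
  using trace_nat_spec[of x] of_nat_inj_below_CHAR[where 'a='a] by metis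

text \<open>The trace is a nonzero polynomial function of degree \<open>p^(m-1) < q\<close>.\<close>
lemma trace_not_identically_zero: "\<exists>s::'a::{finite,field}. trace s \<noteq> 0"
proof -
  let ?p = "CHAR('a)" and ?m = "ext_deg TYPE('a)"
  define f :: "'a poly" where "f = (\<Sum>i<?m. monom 1 (?p ^ i))"
  have poly_f: "poly f z = trace z" for z
    by (simp add: f_def poly_sum poly_monom trace_def)
  have "coeff f (?p ^ (?m - 1)) = (\<Sum>i<?m. if i = ?m - 1 then 1 else 0)"
    unfolding f_def coeff_sum coeff_monom using CHAR_ge_2[where 'a='a] by simp
  also have "\<dots> = 1"
    using ext_deg_pos[where 'a='a] by simp
  finally have f0: "f \<noteq> 0"
    by auto
  have "degree f \<le> ?p ^ (?m - 1)"
    unfolding f_def using CHAR_ge_2[where 'a='a]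
    by (intro degree_sum_le) (auto intro!: order.trans[OF degree_monom_le] power_increasing)
  then have "card {z. poly f z = 0} \<le> ?p ^ (?m - 1)"
    using card_poly_roots_bound[OF f0] by linarith
  also have "\<dots> < ?p ^ ?m"
    using CHAR_ge_2[where 'a='a] ext_deg_pos[where 'a='a] by (intro power_strict_increasing) auto
  also have "\<dots> = CARD('a)"
    by (rule CHAR_power_ext_deg)
  finally have "{z. poly f z = 0} \<noteq> UNIV"
    by auto
  then show ?thesis
    by (auto simp: poly_f)
qed

lemma xi_power_CHAR: "xi TYPE('a::{finite,field}) ^ CHAR('a) = 1"
  unfolding xi_def Complex.DeMoivre using CHAR_ge_2[where 'a='a] by simp

lemma xi_power_mod_CHAR: "xi TYPE('a::{finite,field}) ^ (k mod CHAR('a)) = xi TYPE('a) ^ k"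
proof -
  have "xi TYPE('a) ^ k = xi TYPE('a) ^ (k mod CHAR('a) + CHAR('a) * (k div CHAR('a)))"
    by simp
  then show ?thesis
    by (simp only: power_add power_mult xi_power_CHAR power_one mult_1_right)
qed

lemma cnj_xi_power_mult [simp]:
  "cnj (xi TYPE('a::{finite,field})) ^ l * xi TYPE('a) ^ l = 1"
  "xi TYPE('a) ^ l * cnj (xi TYPE('a)) ^ l = 1"
  by (simp_all add: xi_def Complex.DeMoivre cis_cnj cis_mult flip: complex_cnj_power)

lemma chi_add: "chi (x + y) = chi x * chi (y::'a::{finite,field})"
proof -
  have "trace_nat (x + y) = (trace_nat x + trace_nat y) mod CHAR('a)"
    using CHAR_ge_2[where 'a='a]
    by (intro trace_nat_eqI) (simp_all add: of_nat_mod_CHAR trace_add trace_nat_spec)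
  then show ?thesis
    unfolding chi_def by (simp add: xi_power_mod_CHAR power_add)
qed

lemma chi_0 [simp]: "chi (0::'a::{finite,field}) = 1"
proof -
  have "trace_nat (0::'a) = 0"
    using CHAR_ge_2[where 'a='a] by (intro trace_nat_eqI) (simp_all add: trace_0)
  then show ?thesis
    by (simp add: chi_def)
qed

lemma chi_cis: "chi (x::'a::{finite,field}) = cis (real (trace_nat x) * (2 * pi / real CHAR('a)))"
  unfolding chi_def xi_def by (rule Complex.DeMoivre)

lemma chi_nonzero [simp]: "chi x \<noteq> 0"
  by (simp add: chi_cis)

lemma cnj_chi_mult [simp]: "cnj (chi x) * chi x = 1" "chi x * cnj (chi x) = 1"
  by (simp_all add: chi_cis cis_cnj cis_mult)

lemma chi_sum: "chi (\<Sum>i\<in>A. f i) = (\<Prod>i\<in>A. chi (f i :: 'a::{finite,field}))"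
  by (induction A rule: infinite_finite_induct) (auto simp: chi_add)

lemma chi_nontrivial: "\<exists>s::'a::{finite,field}. chi s \<noteq> 1"
proof -
  obtain s :: 'a where s: "trace s \<noteq> 0"
    using trace_not_identically_zero by blast
  have k: "trace_nat s \<in> {..<CHAR('a)}" "trace_nat s \<noteq> 0"
    using trace_nat_spec[of s] s by (simp, metis of_nat_0)
  have "inj_on (\<lambda>k. cis (2 * pi * real k / real CHAR('a))) {..<CHAR('a)}"
    by (rule bij_betw_imp_inj_on[OF Complex.bij_betw_roots_unity])
      (use CHAR_ge_2[where 'a='a] in simp)
  then have "cis (2 * pi * real (trace_nat s) / real CHAR('a))
      \<noteq> cis (2 * pi * real 0 / real CHAR('a))"
    by (rule inj_on_contraD) (use k CHAR_ge_2[where 'a='a] in auto)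
  then have "chi s \<noteq> 1"
    by (simp add: chi_cis mult_ac)
  then show ?thesis
    by blast
qed

section \<open>Operators on the space of \<open>n\<close> qudits\<close>

lemma finite_fq_vecs: "finite (fq_vecs n :: (nat \<Rightarrow> 'a::{finite,zero}) set)"
proof -
  have "fq_vecs n = {f :: nat \<Rightarrow> 'a. \<forall>x. (x \<in> {1..n} \<longrightarrow> f x \<in> UNIV) \<and> (x \<notin> {1..n} \<longrightarrow> f x = 0)}"
    by (auto simp: fq_vecs_def)
  then show ?thesis
    using finite_set_of_finite_funs[of "{1..n}" "UNIV :: 'a set" 0] by simp
qed

lemma finite_basis_idx [simp]: "finite (basis_idx n :: (nat \<Rightarrow> 'a::{finite,zero}) set)"
  by (simp add: basis_idx_def finite_fq_vecs)

lemma card_basis_idx_pos: "card (basis_idx n :: (nat \<Rightarrow> 'a::{finite,zero}) set) > 0"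
proof -
  have "(\<lambda>j. 0) \<in> (basis_idx n :: (nat \<Rightarrow> 'a) set)"
    by (simp add: basis_idx_def fq_vecs_def)
  then show ?thesis
    by (auto simp: card_gt_0_iff)
qed

definition canonical_op :: "nat \<Rightarrow> 'a::zero qop \<Rightarrow> bool" where
  "canonical_op n A \<longleftrightarrow> canon n A = A"

lemmas op_defs = op_mult_def op_adj_def op_id_def op_smult_def op_add_def op_sum_def canon_def

lemma canonical_op_canon [simp]: "canonical_op n (canon n A)"
  by (auto simp: canonical_op_def canon_def fun_eq_iff)

lemma canonical_op_ops [simp]:
  "canonical_op n (op_mult n A B)" "canonical_op n (op_adj n A)" "canonical_op n (op_id n)"
  "canonical_op n (op_smult n c A)" "canonical_op n (op_add n A B)" "canonical_op n (op_sum n f S)"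
  "canonical_op n (pauli n u)" "canonical_op n (outer n v)" "canonical_op n (\<lambda>x y. 0)"
  by (simp_all add: op_mult_def op_adj_def op_id_def op_smult_def op_add_def op_sum_def pauli_def
      outer_def) (simp add: canonical_op_def canon_def fun_eq_iff)

lemma canon_apply: "canon n M x y = (if x \<in> basis_idx n \<and> y \<in> basis_idx n then M x y else 0)"
  by (simp add: canon_def)

lemma canon_canonical_op [simp]: "canonical_op n A \<Longrightarrow> canon n A = A"
  by (simp add: canonical_op_def)

lemma canonical_op_outside:
  "canonical_op n A \<Longrightarrow> x \<notin> basis_idx n \<or> y \<notin> basis_idx n \<Longrightarrow> A x y = 0"
  unfolding canonical_op_def by (metis canon_def)

lemma op_eqI:
  assumes "canonical_op n A" "canonical_op n B"
    and "\<And>x y. x \<in> basis_idx n \<Longrightarrow> y \<in> basis_idx n \<Longrightarrow> A x y = B x y"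
  shows "A = B"
proof (intro ext)
  fix x y
  show "A x y = B x y"
  proof (cases "x \<in> basis_idx n \<and> y \<in> basis_idx n")
    case False
    then show ?thesis
      using canonical_op_outside[OF assms(1)] canonical_op_outside[OF assms(2)] by auto
  qed (use assms(3) in blast)
qed

lemma op_smult_entry:
  "x \<in> basis_idx n \<Longrightarrow> y \<in> basis_idx n \<Longrightarrow> op_smult n c A x y = c * A x y"
  by (simp add: op_smult_def canon_def)

lemma op_mult_assoc: "op_mult n (op_mult n A B) C = op_mult n A (op_mult n B C)"
  by (auto simp: op_defs fun_eq_iff sum_distrib_left sum_distrib_right mult.assoc intro: sum.swap)

lemma op_adj_mult: "op_adj n (op_mult n A B) = op_mult n (op_adj n B) (op_adj n A)"
  by (auto simp: op_defs fun_eq_iff mult.commute intro!: sum.cong)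

lemma op_adj_adj [simp]: "op_adj n (op_adj n A) = canon n A"
  by (simp add: op_defs fun_eq_iff)

lemma op_mult_canon [simp]:
  "op_mult n (canon n A) B = op_mult n A B" "op_mult n A (canon n B) = op_mult n A B"
  by (auto simp: op_defs fun_eq_iff intro!: sum.cong)

lemma op_mult_id_left [simp]: "op_mult n (op_id n) A = canon n (A :: 'a::{finite,zero} qop)"
proof (intro ext)
  fix x y
  have "(\<Sum>z\<in>basis_idx n. (if x = z then 1 else 0) * A z y) = (if x \<in> basis_idx n then A x y else 0)"
    by (simp add: if_distrib[of "\<lambda>t. t * _"] cong: if_cong)
  then show "op_mult n (op_id n) A x y = canon n A x y"
    by (simp add: op_mult_def op_id_def canon_def cong: if_cong)
qed

lemma op_mult_id_right [simp]: "op_mult n A (op_id n) = canon n (A :: 'a::{finite,zero} qop)"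
proof (intro ext)
  fix x y
  have "(\<Sum>z\<in>basis_idx n. A x z * (if z = y then 1 else 0)) = (if y \<in> basis_idx n then A x y else 0)"
    by (simp add: if_distrib[of "\<lambda>t. _ * t"] cong: if_cong)
  then show "op_mult n A (op_id n) x y = canon n A x y"
    by (simp add: op_mult_def op_id_def canon_def cong: if_cong)
qed

lemma op_adj_id [simp]: "op_adj n (op_id n) = op_id n"
  by (auto simp: op_defs fun_eq_iff)

lemma op_mult_smult_left: "op_mult n (op_smult n c A) B = op_smult n c (op_mult n A B)"
  by (auto simp: op_defs fun_eq_iff sum_distrib_left mult.assoc intro!: sum.cong)

lemma op_mult_smult_right: "op_mult n A (op_smult n c B) = op_smult n c (op_mult n A B)"
  by (auto simp: op_defs fun_eq_iff sum_distrib_left mult.left_commute intro!: sum.cong)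

lemma op_smult_smult [simp]: "op_smult n c (op_smult n d A) = op_smult n (c * d) A"
  by (auto simp: op_defs fun_eq_iff)

lemma op_adj_smult: "op_adj n (op_smult n c A) = op_smult n (cnj c) (op_adj n A)"
  by (auto simp: op_defs fun_eq_iff)

lemma op_smult_1 [simp]: "op_smult n 1 A = canon n A"
  by (auto simp: op_defs fun_eq_iff)

lemma op_zero_simps [simp]:
  "op_smult n c (\<lambda>x y. 0) = (\<lambda>x y. 0)" "op_smult n 0 A = (\<lambda>x y. 0)"
  "op_mult n (\<lambda>x y. 0) A = (\<lambda>x y. 0)" "op_mult n A (\<lambda>x y. 0) = (\<lambda>x y. 0)"
  "op_adj n (\<lambda>x y. 0) = (\<lambda>x y. 0)"
  by (auto simp: op_defs fun_eq_iff)

lemma op_mult_sum_right: "op_mult n A (op_sum n f S) = op_sum n (\<lambda>i. op_mult n A (f i)) S"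
  by (auto simp: op_defs fun_eq_iff sum_distrib_left intro!: sum.cong intro: sum.swap)

lemma op_mult_sum_left: "op_mult n (op_sum n f S) A = op_sum n (\<lambda>i. op_mult n (f i) A) S"
  by (auto simp: op_defs fun_eq_iff sum_distrib_right intro!: sum.cong intro: sum.swap)

lemma op_adj_sum: "op_adj n (op_sum n f S) = op_sum n (\<lambda>i. op_adj n (f i)) S"
  by (auto simp: op_defs fun_eq_iff)

lemma op_smult_sum: "op_smult n c (op_sum n f S) = op_sum n (\<lambda>i. op_smult n c (f i)) S"
  by (auto simp: op_defs fun_eq_iff sum_distrib_left)

lemma op_sum_const: "op_sum n (\<lambda>i. A) S = op_smult n (of_nat (card S)) A"
  by (auto simp: op_defs fun_eq_iff)

lemma op_sum_cong: "(\<And>i. i \<in> S \<Longrightarrow> f i = g i) \<Longrightarrow> op_sum n f S = op_sum n g S"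
  by (auto simp: op_defs fun_eq_iff intro!: sum.cong)

lemma op_sum_reindex_bij_betw:
  assumes "bij_betw h S T"
  shows "op_sum n (\<lambda>i. f (h i)) S = op_sum n f T"
proof -
  have "(\<Sum>i\<in>S. f (h i) x y) = (\<Sum>j\<in>T. f j x y)" for x y
    by (rule sum.reindex_bij_betw[OF assms])
  then show ?thesis
    by (simp add: op_sum_def)
qed

lemma op_sum_Sigma:
  "finite A \<Longrightarrow> (\<And>a. a \<in> A \<Longrightarrow> finite (B a)) \<Longrightarrow>
   op_sum n (\<lambda>a. op_sum n (f a) (B a)) A = op_sum n (\<lambda>p. f (fst p) (snd p)) (Sigma A B)"
  by (auto simp: op_defs fun_eq_iff sum.Sigma split_def)

lemma op_sum_swap:
  "op_sum n (\<lambda>a. op_sum n (f a) B) A = op_sum n (\<lambda>b. op_sum n (\<lambda>a. f a b) A) B"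
  by (auto simp: op_defs fun_eq_iff intro: sum.swap)

lemma op_sum_singleton [simp]: "op_sum n f {a} = canon n (f a)"
  by (auto simp: op_defs fun_eq_iff)

lemma op_sum_indicator:
  assumes "finite S"
  shows "op_sum n (\<lambda>i. if P i then A else (\<lambda>x y. 0)) S = op_smult n (of_nat (card {i \<in> S. P i})) A"
proof -
  have "(\<Sum>i\<in>S. (if P i then A else (\<lambda>x y. 0)) x y) = (\<Sum>i\<in>S. if P i then A x y else 0)" for x y
    by (intro sum.cong) auto
  moreover have "(\<Sum>i\<in>S. if P i then A x y else 0) = (\<Sum>i\<in>{i \<in> S. P i}. A x y)" for x y
    by (rule sum.inter_filter[OF assms, symmetric])
  ultimately show ?thesis
    by (auto simp: op_defs fun_eq_iff)
qed

lemma op_sum_Cons_map: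
  assumes "distinct es"
  shows "op_sum n (\<lambda>i. F ((R # map G es) ! i)) {..<length (R # map G es)}
       = op_add n (F R) (op_sum n (\<lambda>e. F (G e)) (set es))"
proof -
  have "(\<Sum>i<length es. F (map G es ! i) x y) = (\<Sum>e\<in>set es. F (G e) x y)" for x y
    using sum.reindex_bij_betw[OF bij_betw_nth[OF assms refl refl], of "\<lambda>e. F (G e) x y"] by simp
  then show ?thesis
    by (auto simp: op_sum_def op_add_def canon_def fun_eq_iff sum.lessThan_Suc_shift
        simp del: sum.lessThan_Suc)
qed

lemma op_add_zero [simp]: "op_add n A (\<lambda>x y. 0) = canon n A" "op_add n (\<lambda>x y. 0) A = canon n A"
  by (auto simp: op_defs fun_eq_iff)

lemma op_add_neg_self: "op_add n A (op_smult n (-1) A) = (\<lambda>x y. 0)"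
  by (auto simp: op_defs fun_eq_iff)

lemma op_mult_add_left: "op_mult n (op_add n A B) C = op_add n (op_mult n A C) (op_mult n B C)"
  by (auto simp: op_defs fun_eq_iff distrib_right sum.distrib intro!: sum.cong)

lemma op_mult_add_right: "op_mult n A (op_add n B C) = op_add n (op_mult n A B) (op_mult n A C)"
  by (auto simp: op_defs fun_eq_iff distrib_left sum.distrib intro!: sum.cong)

lemma op_adj_add: "op_adj n (op_add n A B) = op_add n (op_adj n A) (op_adj n B)"
  by (auto simp: op_defs fun_eq_iff)

definition op_conj :: "nat \<Rightarrow> 'a::zero qop \<Rightarrow> 'a qop \<Rightarrow> 'a qop" where
  "op_conj n E X = op_mult n (op_mult n E X) (op_adj n E)"

lemma canonical_op_conj [simp]: "canonical_op n (op_conj n E X)"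
  by (simp add: op_conj_def)

lemma op_conj_mult: "op_conj n (op_mult n A B) X = op_conj n A (op_conj n B X)"
  by (simp add: op_conj_def op_mult_assoc op_adj_mult)

lemma op_conj_smult_left: "op_conj n (op_smult n c E) X = op_smult n (c * cnj c) (op_conj n E X)"
  by (simp add: op_conj_def op_adj_smult op_mult_smult_left op_mult_smult_right mult.commute)

lemma op_conj_smult_right: "op_conj n E (op_smult n c X) = op_smult n c (op_conj n E X)"
  by (simp add: op_conj_def op_mult_smult_left op_mult_smult_right)

lemma op_conj_sum: "op_conj n E (op_sum n f S) = op_sum n (\<lambda>i. op_conj n E (f i)) S"
  by (simp add: op_conj_def op_mult_sum_left op_mult_sum_right)

lemma op_adj_conj: "op_adj n (op_conj n E X) = op_conj n E (op_adj n X)"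
  by (simp add: op_conj_def op_adj_mult op_mult_assoc)

lemma kraus_apply_smult: "kraus_apply n Ks (op_smult n c X) = op_smult n c (kraus_apply n Ks X)"
  by (simp add: kraus_apply_def op_mult_smult_left op_mult_smult_right op_smult_sum)

lemma kraus_apply_sum: "kraus_apply n Ks (op_sum n f S) = op_sum n (\<lambda>i. kraus_apply n Ks (f i)) S"
  by (simp add: kraus_apply_def op_mult_sum_left op_mult_sum_right op_sum_swap[of n _ S])

lemma op_apply_qvecs: "op_apply n A v \<in> qvecs n"
  by (simp add: op_apply_def qvecs_def)

lemma op_apply_mult: "op_apply n (op_mult n A B) v = op_apply n A (op_apply n B v)"
  by (auto simp: op_apply_def op_defs fun_eq_iff sum_distrib_left sum_distrib_right mult.assoc
      intro: sum.swap)

lemma op_apply_smult: "op_apply n (op_smult n c A) v = (\<lambda>x. c * op_apply n A v x)"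
  by (auto simp: op_apply_def op_defs fun_eq_iff sum_distrib_left mult.assoc intro!: sum.cong)

lemma op_apply_sum: "op_apply n (op_sum n f S) v = (\<lambda>x. \<Sum>i\<in>S. op_apply n (f i) v x)"
  by (auto simp: op_apply_def op_defs fun_eq_iff sum_distrib_right intro: sum.swap)

lemma op_apply_add: "op_apply n A (\<lambda>x. v x + w x) = (\<lambda>x. op_apply n A v x + op_apply n A w x)"
  by (auto simp: op_apply_def fun_eq_iff distrib_left sum.distrib)

lemma op_apply_scale: "op_apply n A (\<lambda>x. c * v x) = (\<lambda>x. c * op_apply n A v x)"
  by (auto simp: op_apply_def fun_eq_iff sum_distrib_left mult_ac)

lemma outer_entry: "x \<in> basis_idx n \<Longrightarrow> y \<in> basis_idx n \<Longrightarrow> outer n v x y = v x * cnj (v y)"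
  by (simp add: outer_def canon_def)

lemma op_mult_outer_left: "op_mult n A (outer n v) = canon n (\<lambda>x y. op_apply n A v x * cnj (v y))"
  by (auto simp: op_defs outer_def op_apply_def fun_eq_iff sum_distrib_right mult.assoc
      intro!: sum.cong)

lemma op_mult_outer_right:
  "op_mult n (outer n v) A = canon n (\<lambda>x y. v x * cnj (op_apply n (op_adj n A) v y))"
  by (auto simp: op_defs outer_def op_apply_def fun_eq_iff sum_distrib_left mult.assoc mult.commute
      intro!: sum.cong)

lemma outer_op_apply: "outer n (op_apply n A v) = op_conj n A (outer n v)"
  by (auto simp: op_conj_def op_mult_outer_left op_defs outer_def op_apply_def fun_eq_iff
      sum_distrib_left mult.assoc mult.commute intro!: sum.cong)

definition op_trace :: "nat \<Rightarrow> 'a::zero qop \<Rightarrow> complex" where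
  "op_trace n A = (\<Sum>x\<in>basis_idx n. A x x)"

lemma op_trace_smult: "op_trace n (op_smult n c A) = c * op_trace n A"
  by (simp add: op_trace_def op_defs sum_distrib_left)

lemma op_trace_sum: "op_trace n (op_sum n f S) = (\<Sum>i\<in>S. op_trace n (f i))"
  by (simp add: op_trace_def op_defs sum.swap[of _ S])

lemma op_trace_id: "op_trace n (op_id n :: 'a::zero qop) = of_nat (card (basis_idx n :: (nat \<Rightarrow> 'a) set))"
  by (simp add: op_trace_def op_defs)

section \<open>Symplectic vectors and Pauli operators\<close>

definition vadd :: "(nat \<Rightarrow> 'a::ab_group_add) \<times> (nat \<Rightarrow> 'a) \<Rightarrow> (nat \<Rightarrow> 'a) \<times> (nat \<Rightarrow> 'a)
    \<Rightarrow> (nat \<Rightarrow> 'a) \<times> (nat \<Rightarrow> 'a)" where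
  "vadd u v = (\<lambda>j. fst u j + fst v j, \<lambda>j. snd u j + snd v j)"

definition vsub :: "(nat \<Rightarrow> 'a::ab_group_add) \<times> (nat \<Rightarrow> 'a) \<Rightarrow> (nat \<Rightarrow> 'a) \<times> (nat \<Rightarrow> 'a)
    \<Rightarrow> (nat \<Rightarrow> 'a) \<times> (nat \<Rightarrow> 'a)" where
  "vsub u v = (\<lambda>j. fst u j - fst v j, \<lambda>j. snd u j - snd v j)"

definition vzero :: "(nat \<Rightarrow> 'a::zero) \<times> (nat \<Rightarrow> 'a)" where
  "vzero = (\<lambda>j. 0, \<lambda>j. 0)"

definition vsmult :: "'a::field \<Rightarrow> (nat \<Rightarrow> 'a) \<times> (nat \<Rightarrow> 'a) \<Rightarrow> (nat \<Rightarrow> 'a) \<times> (nat \<Rightarrow> 'a)" where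
  "vsmult c u = (\<lambda>j. c * fst u j, \<lambda>j. c * snd u j)"

lemma finite_sympl_vecs: "finite (sympl_vecs n :: ((nat \<Rightarrow> 'a::{finite,zero}) \<times> (nat \<Rightarrow> 'a)) set)"
  by (simp add: sympl_vecs_def finite_fq_vecs)

lemma sympl_vecs_closed [simp]:
  "u \<in> sympl_vecs n \<Longrightarrow> v \<in> sympl_vecs n \<Longrightarrow> vadd u v \<in> sympl_vecs n"
  "u \<in> sympl_vecs n \<Longrightarrow> v \<in> sympl_vecs n \<Longrightarrow> vsub u v \<in> sympl_vecs n"
  by (auto simp: sympl_vecs_def vadd_def vsub_def fq_vecs_def)

lemma vsub_vadd_simps [simp]:
  "vadd u (vsub v u) = v" "vsub (vadd u v) u = v" "vsub u (vsub u v) = v"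
  "vadd (vsub v u) u = v" "vsub (vadd v u) u = v"
  by (simp_all add: vadd_def vsub_def)

lemma vadd_commute: "vadd u v = vadd v u"
  by (simp add: vadd_def add.commute)

lemma vsub_eq_vzero_iff: "vsub u v = vzero \<longleftrightarrow> u = v"
  by (auto simp: vsub_def vzero_def fun_eq_iff prod_eq_iff)

definition dot :: "nat \<Rightarrow> (nat \<Rightarrow> 'a::comm_ring) \<Rightarrow> (nat \<Rightarrow> 'a) \<Rightarrow> 'a" where
  "dot n a b = (\<Sum>j\<in>{1..n}. a j * b j)"

lemma dot_commute: "dot n a b = dot n b a"
  by (simp add: dot_def mult.commute)

lemma dot_add_right: "dot n a (\<lambda>j. b j + c j) = dot n a b + dot n a c"
  by (simp add: dot_def distrib_left sum.distrib)

lemma dot_add_left: "dot n (\<lambda>j. b j + c j) a = dot n b a + dot n c a"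
  by (simp add: dot_def distrib_right sum.distrib)

lemma dot_smult_left: "dot n (\<lambda>j. c * b j) a = c * dot n b (a :: nat \<Rightarrow> 'a::comm_ring)"
  by (simp add: dot_def sum_distrib_left mult.assoc)

lemma sympl_form_dot: "sympl_form n x y = dot n (fst x) (snd y) - dot n (snd x) (fst y)"
  by (simp add: sympl_form_def dot_def)

lemma sympl_form_vsmult: "sympl_form n (vsmult c x) y = c * sympl_form n x y"
  by (simp add: sympl_form_dot vsmult_def dot_smult_left right_diff_distrib)

lemma sympl_form_antisym: "sympl_form n u v = - sympl_form n v u"
  by (simp add: sympl_form_dot dot_commute)

lemma pauli_entry:
  "pauli n u x y = (if x \<in> basis_idx n \<and> y \<in> basis_idx n \<and> x = (\<lambda>j. y j + fst u j)
      then chi (dot n (snd u) y) else 0)"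
  by (auto simp: pauli_def canon_def dot_def chi_sum)

lemma translate_in_basis_idx:
  fixes y :: "nat \<Rightarrow> 'a::ab_group_add"
  shows "y \<in> basis_idx n \<Longrightarrow> u \<in> sympl_vecs n \<Longrightarrow> (\<lambda>j. y j + fst u j) \<in> basis_idx n"
  "y \<in> basis_idx n \<Longrightarrow> u \<in> sympl_vecs n \<Longrightarrow> (\<lambda>j. y j - fst u j) \<in> basis_idx n"
  by (auto simp: basis_idx_def sympl_vecs_def fq_vecs_def)

text \<open>Only the summand \<open>z = y + a\<^sub>v\<close> survives in the matrix product.\<close>
lemma pauli_mult:
  fixes u v :: "(nat \<Rightarrow> 'a::{finite,field}) \<times> (nat \<Rightarrow> 'a)"
  assumes u: "u \<in> sympl_vecs n" and v: "v \<in> sympl_vecs n"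
  shows "op_mult n (pauli n u) (pauli n v)
       = op_smult n (chi (dot n (snd u) (fst v))) (pauli n (vadd u v))"
proof (rule op_eqI[where n=n])
  fix x y :: "nat \<Rightarrow> 'a" assume x: "x \<in> basis_idx n" and y: "y \<in> basis_idx n"
  define w where "w = (\<lambda>j. y j + fst v j)"
  have w: "w \<in> basis_idx n"
    unfolding w_def using y v by (rule translate_in_basis_idx)
  have "(\<Sum>z\<in>basis_idx n. pauli n u x z * pauli n v z y)
      = (\<Sum>z\<in>basis_idx n. if z = w then pauli n u x z * chi (dot n (snd v) y) else 0)"
    by (intro sum.cong refl) (auto simp: pauli_entry w_def y)
  also have "\<dots> = pauli n u x w * chi (dot n (snd v) y)"
    using w by simp
  also have "\<dots> = (if x = (\<lambda>j. y j + (fst u j + fst v j)) then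
       chi (dot n (snd u) (fst v)) * chi (dot n (\<lambda>j. snd u j + snd v j) y) else 0)"
    using x w
    by (simp add: pauli_entry w_def add.assoc add.commute[of "fst u _"] dot_add_right dot_add_left
        chi_add mult_ac)
  finally show "op_mult n (pauli n u) (pauli n v) x y =
      op_smult n (chi (dot n (snd u) (fst v))) (pauli n (vadd u v)) x y"
    using x y by (simp add: op_mult_def op_smult_entry canon_def pauli_entry vadd_def)
qed simp_all

lemma pauli_vzero: "pauli n vzero = (op_id n :: 'a::{finite,field} qop)"
  by (rule op_eqI[where n=n]) (simp_all add: pauli_entry op_id_def canon_apply vzero_def dot_def)

lemma pauli_adj_mult_self:
  fixes u :: "(nat \<Rightarrow> 'a::{finite,field}) \<times> (nat \<Rightarrow> 'a)"
  assumes u: "u \<in> sympl_vecs n"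
  shows "op_mult n (op_adj n (pauli n u)) (pauli n u) = op_id n"
proof (rule op_eqI[where n=n])
  fix x y :: "nat \<Rightarrow> 'a" assume x: "x \<in> basis_idx n" and y: "y \<in> basis_idx n"
  define w where "w = (\<lambda>j. x j + fst u j)"
  have w: "w \<in> basis_idx n"
    unfolding w_def using x u by (rule translate_in_basis_idx)
  have eq: "w = (\<lambda>j. y j + fst u j) \<longleftrightarrow> x = y"
    by (auto simp: w_def fun_eq_iff)
  have "(\<Sum>z\<in>basis_idx n. cnj (pauli n u z x) * pauli n u z y)
      = (\<Sum>z\<in>basis_idx n. if z = w then cnj (chi (dot n (snd u) x)) * pauli n u z y else 0)"
    by (intro sum.cong refl) (auto simp: pauli_entry w_def x)
  also have "\<dots> = cnj (chi (dot n (snd u) x)) * pauli n u w y"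
    using w by simp
  also have "\<dots> = (if x = y then 1 else 0)"
    using w y eq by (auto simp: pauli_entry)
  finally show "op_mult n (op_adj n (pauli n u)) (pauli n u) x y = op_id n x y"
    using x y by (simp add: op_mult_def op_adj_def op_id_def canon_def)
qed simp_all

lemma pauli_mult_adj_self:
  fixes u :: "(nat \<Rightarrow> 'a::{finite,field}) \<times> (nat \<Rightarrow> 'a)"
  assumes u: "u \<in> sympl_vecs n"
  shows "op_mult n (pauli n u) (op_adj n (pauli n u)) = op_id n"
proof (rule op_eqI[where n=n])
  fix x y :: "nat \<Rightarrow> 'a" assume x: "x \<in> basis_idx n" and y: "y \<in> basis_idx n"
  define w where "w = (\<lambda>j. x j - fst u j)"
  have w: "w \<in> basis_idx n"
    unfolding w_def using x u by (rule translate_in_basis_idx)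
  have eq: "y = (\<lambda>j. w j + fst u j) \<longleftrightarrow> x = y"
    by (auto simp: w_def fun_eq_iff)
  have "(\<Sum>z\<in>basis_idx n. pauli n u x z * cnj (pauli n u y z))
      = (\<Sum>z\<in>basis_idx n. if z = w then chi (dot n (snd u) z) * cnj (pauli n u y z) else 0)"
    by (intro sum.cong refl) (auto simp: pauli_entry x w_def fun_eq_iff algebra_simps)
  also have "\<dots> = chi (dot n (snd u) w) * cnj (pauli n u y w)"
    using w by simp
  also have "\<dots> = (if x = y then 1 else 0)"
    using w y eq by (auto simp: pauli_entry)
  finally show "op_mult n (pauli n u) (op_adj n (pauli n u)) x y = op_id n x y"
    using x y by (simp add: op_mult_def op_adj_def op_id_def canon_def)
qed simp_all

lemma pauli_adj_mult:
  fixes u v :: "(nat \<Rightarrow> 'a::{finite,field}) \<times> (nat \<Rightarrow> 'a)"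
  assumes u: "u \<in> sympl_vecs n" and v: "v \<in> sympl_vecs n"
  shows "op_mult n (op_adj n (pauli n u)) (pauli n v)
       = op_smult n (cnj (chi (dot n (snd u) (fst (vsub v u))))) (pauli n (vsub v u))"
proof -
  let ?c = "chi (dot n (snd u) (fst (vsub v u)))"
  have "op_mult n (pauli n u) (pauli n (vsub v u)) = op_smult n ?c (pauli n v)"
    using pauli_mult[OF u sympl_vecs_closed(2)[OF v u]] by simp
  then have "pauli n (vsub v u) = op_smult n ?c (op_mult n (op_adj n (pauli n u)) (pauli n v))"
    by (metis op_mult_assoc op_mult_smult_right pauli_adj_mult_self[OF u] op_mult_id_left
        canon_canonical_op canonical_op_ops(7))
  then show ?thesis
    by simp
qed

lemma pauli_commutation:
  fixes u v :: "(nat \<Rightarrow> 'a::{finite,field}) \<times> (nat \<Rightarrow> 'a)"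
  assumes u: "u \<in> sympl_vecs n" and v: "v \<in> sympl_vecs n"
  shows "op_mult n (pauli n u) (pauli n v)
       = op_smult n (chi (- sympl_form n u v)) (op_mult n (pauli n v) (pauli n u))"
proof -
  have "chi (- sympl_form n u v) * chi (dot n (snd v) (fst u)) = chi (dot n (snd u) (fst v))"
    unfolding chi_add[symmetric] sympl_form_dot by (simp add: dot_commute)
  then show ?thesis
    by (simp add: pauli_mult[OF u v] pauli_mult[OF v u] vadd_commute)
qed

lemma pauli_commute:
  fixes u v :: "(nat \<Rightarrow> 'a::{finite,field}) \<times> (nat \<Rightarrow> 'a)"
  assumes "u \<in> sympl_vecs n" "v \<in> sympl_vecs n" "sympl_form n u v = 0"
  shows "op_mult n (pauli n u) (pauli n v) = op_mult n (pauli n v) (pauli n u)"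
  using pauli_commutation[OF assms(1,2)] assms(3) by simp

lemma op_conj_pauli_pauli:
  fixes u v :: "(nat \<Rightarrow> 'a::{finite,field}) \<times> (nat \<Rightarrow> 'a)"
  assumes "u \<in> sympl_vecs n" "v \<in> sympl_vecs n"
  shows "op_conj n (pauli n u) (op_conj n (pauli n v) X) = op_conj n (pauli n (vadd u v)) X"
  by (simp add: op_conj_mult[symmetric] pauli_mult[OF assms] op_conj_smult_left)

text \<open>Translating \<open>y\<close> in a coordinate where \<open>b\<close> is nonzero multiplies every summand by the
  same nontrivial character value.\<close>
lemma sum_chi_dot_eq_0:
  fixes b :: "nat \<Rightarrow> 'a::{finite,field}"
  assumes "j0 \<in> {1..n}" "b j0 \<noteq> 0"
  shows "(\<Sum>y\<in>basis_idx n. chi (dot n b y)) = 0"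
proof -
  obtain s :: 'a where s: "chi s \<noteq> 1"
    using chi_nontrivial by blast
  define e where "e = (\<lambda>j. if j = j0 then s / b j0 else 0)"
  have e: "(\<lambda>j. 0, e) \<in> sympl_vecs n" "(e, \<lambda>j. 0) \<in> sympl_vecs n"
    using assms(1) by (auto simp: e_def sympl_vecs_def fq_vecs_def)
  have "bij_betw (\<lambda>y j. y j + e j) (basis_idx n) (basis_idx n)"
    by (rule bij_betwI[where g = "\<lambda>y j. y j - e j"])
      (use translate_in_basis_idx[OF _ e(2)] in auto)
  then have "(\<Sum>y\<in>basis_idx n. chi (dot n b y)) = (\<Sum>y\<in>basis_idx n. chi (dot n b (\<lambda>j. y j + e j)))"
    by (rule sum.reindex_bij_betw[symmetric])
  also have "dot n b e = s"
    using assms by (simp add: e_def dot_def if_distrib[of "\<lambda>t. _ * t"] cong: if_cong)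
  then have "(\<Sum>y\<in>basis_idx n. chi (dot n b (\<lambda>j. y j + e j)))
      = chi s * (\<Sum>y\<in>basis_idx n. chi (dot n b y))"
    by (simp add: dot_add_right chi_add sum_distrib_left mult.commute)
  finally show ?thesis
    using s by (metis mult_cancel_right1)
qed

lemma op_trace_pauli:
  fixes u :: "(nat \<Rightarrow> 'a::{finite,field}) \<times> (nat \<Rightarrow> 'a)"
  assumes u: "u \<in> sympl_vecs n" and "u \<noteq> vzero"
  shows "op_trace n (pauli n u) = 0"
proof (cases "fst u = (\<lambda>j. 0)")
  case False
  then have "x \<noteq> (\<lambda>j. x j + fst u j)" for x :: "nat \<Rightarrow> 'a"
    by (auto simp: fun_eq_iff)
  then show ?thesis
    by (simp add: op_trace_def pauli_entry)
next
  case True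
  with \<open>u \<noteq> vzero\<close> obtain j0 where "snd u j0 \<noteq> 0"
    by (auto simp: vzero_def prod_eq_iff)
  moreover from this have "j0 \<in> {1..n}"
    using u by (auto simp: sympl_vecs_def fq_vecs_def)
  ultimately show ?thesis
    using True sum_chi_dot_eq_0[of j0 n "snd u"] by (simp add: op_trace_def pauli_entry)
qed

section \<open>The code projector\<close>

locale stabilizer =
  fixes n :: nat and C :: "((nat \<Rightarrow> 'a::{finite,field}) \<times> (nat \<Rightarrow> 'a)) set"
    and lam :: "'a qop \<Rightarrow> complex"
  assumes linear: "linear_code n C" and self_orth: "sympl_self_orth n C"
    and character: "stab_character n C lam"
begin

abbreviation "S \<equiv> stab_group n C"
abbreviation "basis_n \<equiv> (basis_idx n :: (nat \<Rightarrow> 'a) set)"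

lemma code_sympl_vecs: "c \<in> C \<Longrightarrow> c \<in> sympl_vecs n"
  using linear by (auto simp: linear_code_def)

lemma finite_code: "finite C"
  using linear finite_sympl_vecs finite_subset by (auto simp: linear_code_def)

lemma vzero_in_code: "vzero \<in> C"
  using linear by (simp add: linear_code_def vzero_def)

lemma card_code_pos: "card C > 0"
  using finite_code vzero_in_code by (auto simp: card_gt_0_iff)

lemma vadd_in_code: "c \<in> C \<Longrightarrow> d \<in> C \<Longrightarrow> vadd c d \<in> C"
  using linear by (simp add: linear_code_def vadd_def)

lemma vsmult_in_code: "c \<in> C \<Longrightarrow> vsmult t c \<in> C"
  using linear by (simp add: linear_code_def vsmult_def)

lemma vsub_in_code: "c \<in> C \<Longrightarrow> d \<in> C \<Longrightarrow> vsub c d \<in> C"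
proof -
  assume "c \<in> C" "d \<in> C"
  moreover have "vsub c d = vadd c (vsmult (-1) d)"
    by (simp add: vsub_def vadd_def vsmult_def)
  ultimately show ?thesis
    by (simp add: vadd_in_code vsmult_in_code)
qed

lemma code_in_dual: "c \<in> C \<Longrightarrow> c \<in> sympl_dual n C"
  using self_orth by (auto simp: sympl_self_orth_def)

lemma lam_nonzero: "A \<in> S \<Longrightarrow> lam A \<noteq> 0"
  using character by (simp add: stab_character_def)

lemma lam_mult: "A \<in> S \<Longrightarrow> B \<in> S \<Longrightarrow> lam (op_mult n A B) = lam A * lam B"
  using character by (simp add: stab_character_def)

lemma canonical_op_stab_group: "A \<in> S \<Longrightarrow> canonical_op n A"
  by (induction rule: stab_group.induct) auto

lemma op_id_in_stab_group: "op_id n \<in> S"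
  using stab_group.scal[of n 0 C] by simp

lemma lam_id: "lam (op_id n) = 1"
  using lam_mult[OF op_id_in_stab_group op_id_in_stab_group] lam_nonzero[OF op_id_in_stab_group]
  by simp

lemma lam_xi_power: "lam (op_smult n (xi TYPE('a) ^ l) (op_id n)) = xi TYPE('a) ^ l"
proof (induction l)
  case (Suc l)
  have "op_smult n (xi TYPE('a) ^ Suc l) (op_id n :: 'a qop)
      = op_mult n (op_smult n (xi TYPE('a) ^ 1) (op_id n)) (op_smult n (xi TYPE('a) ^ l) (op_id n))"
    by (simp add: op_mult_smult_left op_mult_smult_right mult.commute)
  then show ?case
    using lam_mult[OF stab_group.scal[of n 1 C] stab_group.scal[of n l C]] Suc character
    by (simp add: stab_character_def)
qed (simp add: lam_id)

lemma lam_smult_chi: "E \<in> S \<Longrightarrow> lam (op_smult n (chi (x::'a)) E) = chi x * lam E"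
proof -
  assume E: "E \<in> S"
  have "op_smult n (chi x) E = op_mult n (op_smult n (xi TYPE('a) ^ trace_nat x) (op_id n)) E"
    using canonical_op_stab_group[OF E] by (simp add: op_mult_smult_left chi_def)
  then show ?thesis
    using lam_mult[OF stab_group.scal E] lam_xi_power by (simp add: chi_def)
qed

lemma lam_pauli_nonzero: "c \<in> C \<Longrightarrow> lam (pauli n c) \<noteq> 0"
  using lam_nonzero stab_group.gen by blast

lemma lam_pauli_mult:
  assumes c: "c \<in> C" and d: "d \<in> C"
  shows "lam (pauli n c) * lam (pauli n d) = chi (dot n (snd c) (fst d)) * lam (pauli n (vadd c d))"
  using lam_mult[OF stab_group.gen[OF c] stab_group.gen[OF d]]
    lam_smult_chi[OF stab_group.gen[OF vadd_in_code[OF c d]]]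
  by (simp add: pauli_mult[OF code_sympl_vecs code_sympl_vecs, OF c d])

definition code_proj :: "'a qop" where
  "code_proj = op_smult n (1 / of_nat (card C))
     (op_sum n (\<lambda>c. op_smult n (inverse (lam (pauli n c))) (pauli n c)) C)"

lemma canonical_op_code_proj [simp]: "canonical_op n code_proj"
  by (simp add: code_proj_def)

lemma bij_betw_vadd_code: "c \<in> C \<Longrightarrow> bij_betw (vadd c) C C"
  by (rule bij_betwI[where g = "\<lambda>e. vsub e c"]) (auto simp: vadd_in_code vsub_in_code)

lemma pauli_mult_code_proj:
  assumes c: "c \<in> C"
  shows "op_mult n (pauli n c) code_proj = op_smult n (lam (pauli n c)) code_proj"
proof -
  let ?k = "1 / of_nat (card C) :: complex"
  let ?g = "\<lambda>e. op_smult n (inverse (lam (pauli n e))) (pauli n e)"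
  have "op_mult n (pauli n c) (?g d) = op_smult n (lam (pauli n c)) (?g (vadd c d))"
    if d: "d \<in> C" for d
  proof -
    have "inverse (lam (pauli n d)) * chi (dot n (snd c) (fst d))
        = lam (pauli n c) * inverse (lam (pauli n (vadd c d)))"
      using lam_pauli_mult[OF c d] lam_pauli_nonzero[OF c] lam_pauli_nonzero[OF d]
        lam_pauli_nonzero[OF vadd_in_code[OF c d]]
      by (simp add: field_simps)
    then show ?thesis
      by (simp add: op_mult_smult_right pauli_mult[OF code_sympl_vecs code_sympl_vecs, OF c d])
  qed
  then have "op_mult n (pauli n c) code_proj
      = op_smult n ?k (op_sum n (\<lambda>d. op_smult n (lam (pauli n c)) (?g (vadd c d))) C)"
    unfolding code_proj_def op_mult_smult_right op_mult_sum_right by (simp cong: op_sum_cong)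
  also have "\<dots> = op_smult n ?k (op_smult n (lam (pauli n c)) (op_sum n (\<lambda>d. ?g (vadd c d)) C))"
    by (simp only: op_smult_sum)
  also have "\<dots> = op_smult n (lam (pauli n c)) (op_smult n ?k (op_sum n (\<lambda>d. ?g (vadd c d)) C))"
    by (simp only: op_smult_smult mult.commute)
  also have "op_sum n (\<lambda>d. ?g (vadd c d)) C = op_sum n ?g C"
    by (rule op_sum_reindex_bij_betw[OF bij_betw_vadd_code[OF c]])
  finally show ?thesis
    by (simp add: code_proj_def)
qed

lemma stab_group_unitary:
  "A \<in> S \<Longrightarrow> op_mult n (op_adj n A) A = op_id n \<and> op_mult n A (op_adj n A) = op_id n"
proof (induction rule: stab_group.induct)
  case (gen c)
  then show ?case
    using pauli_adj_mult_self pauli_mult_adj_self code_sympl_vecs by blast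
next
  case (mult A B)
  have "op_mult n (op_adj n (op_mult n A B)) (op_mult n A B)
      = op_mult n (op_adj n B) (op_mult n (op_mult n (op_adj n A) A) B)"
    and "op_mult n (op_mult n A B) (op_adj n (op_mult n A B))
      = op_mult n A (op_mult n (op_mult n B (op_adj n B)) (op_adj n A))"
    by (simp_all add: op_adj_mult op_mult_assoc)
  then show ?case
    using mult.IH canonical_op_stab_group[OF mult.hyps(1)] canonical_op_stab_group[OF mult.hyps(2)]
    by simp
next
  case (inv A)
  then show ?case
    using canonical_op_stab_group[OF inv.hyps] by simp
qed (simp add: op_mult_smult_left op_mult_smult_right op_adj_smult)

lemma stab_group_mult_code_proj: "A \<in> S \<Longrightarrow> op_mult n A code_proj = op_smult n (lam A) code_proj"
proof (induction rule: stab_group.induct)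
  case (scal l)
  show ?case
    by (simp add: lam_xi_power op_mult_smult_left)
next
  case (gen c)
  then show ?case
    by (rule pauli_mult_code_proj)
next
  case (mult A B)
  then show ?case
    using lam_mult[OF mult.hyps] by (simp add: op_mult_assoc op_mult_smult_right mult.commute)
next
  case (inv A)
  have "lam (op_adj n A) * lam A = 1"
    using lam_mult[OF stab_group.inv[OF inv.hyps] inv.hyps] stab_group_unitary[OF inv.hyps] lam_id
    by simp
  moreover have "op_smult n (lam A) (op_mult n (op_adj n A) code_proj) = code_proj"
  proof -
    have "op_mult n (op_adj n A) (op_mult n A code_proj)
        = op_mult n (op_mult n (op_adj n A) A) code_proj"
      by (rule op_mult_assoc[symmetric])
    then show ?thesis
      using inv.IH stab_group_unitary[OF inv.hyps] by (simp add: op_mult_smult_right)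
  qed
  ultimately show ?case
    by (metis op_smult_smult op_smult_1 canon_canonical_op canonical_op_ops(1))
qed

lemma stab_code_iff_code_proj_fixed:
  "v \<in> stab_code n C lam \<longleftrightarrow> v \<in> qvecs n \<and> op_apply n code_proj v = v"
proof
  assume v: "v \<in> stab_code n C lam"
  then have "op_apply n (pauli n c) v = (\<lambda>x. lam (pauli n c) * v x)" if "c \<in> C" for c
    using stab_group.gen[OF that] by (auto simp: stab_code_def)
  moreover have "(\<Sum>c\<in>C. inverse (lam (pauli n c)) * (lam (pauli n c) * v x)) = (\<Sum>c\<in>C. v x)" for x
    using lam_pauli_nonzero by (intro sum.cong) simp_all
  ultimately have "op_apply n code_proj v x = 1 / of_nat (card C) * (\<Sum>c\<in>C. v x)" for x
    by (simp add: code_proj_def op_apply_smult op_apply_sum)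
  then show "v \<in> qvecs n \<and> op_apply n code_proj v = v"
    using v card_code_pos by (auto simp: stab_code_def)
next
  assume v: "v \<in> qvecs n \<and> op_apply n code_proj v = v"
  have "op_apply n E v = (\<lambda>x. lam E * v x)" if "E \<in> S" for E
  proof -
    have "op_apply n E v = op_apply n (op_mult n E code_proj) v"
      using v by (simp add: op_apply_mult)
    also have "\<dots> = (\<lambda>x. lam E * v x)"
      using v by (simp add: stab_group_mult_code_proj[OF that] op_apply_smult)
    finally show ?thesis .
  qed
  then show "v \<in> stab_code n C lam"
    using v by (simp add: stab_code_def)
qed

lemma code_proj_idem: "op_mult n code_proj code_proj = code_proj"
proof -
  let ?k = "1 / of_nat (card C) :: complex"
  have "op_mult n code_proj code_proj = op_smult n ?k
      (op_sum n (\<lambda>c. op_smult n (inverse (lam (pauli n c))) (op_mult n (pauli n c) code_proj)) C)"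
    unfolding code_proj_def op_mult_smult_left op_mult_sum_left ..
  also have "\<dots> = op_smult n ?k (op_sum n (\<lambda>c. code_proj) C)"
    using lam_pauli_nonzero by (intro arg_cong[where f = "op_smult n ?k"] op_sum_cong)
      (simp add: pauli_mult_code_proj)
  finally show ?thesis
    using card_code_pos by (simp add: op_sum_const)
qed

lemma pauli_dual_commute_code_proj:
  assumes u: "u \<in> sympl_dual n C"
  shows "op_mult n (pauli n u) code_proj = op_mult n code_proj (pauli n u)"
proof -
  have uV: "u \<in> sympl_vecs n"
    using u by (simp add: sympl_dual_def)
  have "op_mult n (pauli n u) (pauli n c) = op_mult n (pauli n c) (pauli n u)" if c: "c \<in> C" for c
    using u c sympl_form_antisym[of n u c]
    by (intro pauli_commute[OF uV code_sympl_vecs[OF c]]) (auto simp: sympl_dual_def)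
  then show ?thesis
    by (simp add: code_proj_def op_mult_smult_left op_mult_smult_right op_mult_sum_left
        op_mult_sum_right cong: op_sum_cong)
qed

lemma code_proj_mult_pauli:
  "c \<in> C \<Longrightarrow> op_mult n code_proj (pauli n c) = op_smult n (lam (pauli n c)) code_proj"
  using pauli_dual_commute_code_proj[OF code_in_dual] pauli_mult_code_proj by simp

lemma op_trace_code_proj: "op_trace n code_proj = of_nat (card basis_n) / of_nat (card C)"
proof -
  have "inverse (lam (pauli n c)) * op_trace n (pauli n c)
      = (if c = vzero then of_nat (card basis_n) else 0)"
    if "c \<in> C" for c
    using op_trace_pauli[OF code_sympl_vecs[OF that]] lam_id by (auto simp: pauli_vzero op_trace_id)
  then have "op_trace n code_proj
      = 1 / of_nat (card C) * (\<Sum>c\<in>C. if c = vzero then of_nat (card basis_n) else 0)"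
    by (simp add: code_proj_def op_trace_smult op_trace_sum)
  then show ?thesis
    using vzero_in_code finite_code by simp
qed

lemma code_proj_nonzero: "\<exists>x\<in>basis_n. \<exists>y\<in>basis_n. code_proj x y \<noteq> 0"
proof (rule ccontr)
  assume "\<not> ?thesis"
  then have "op_trace n code_proj = 0"
    by (simp add: op_trace_def)
  then show False
    using op_trace_code_proj card_basis_idx_pos[of n, where 'a='a] card_code_pos by simp
qed

text \<open>Comparing \<open>(E\<^sub>c P)\<^sup>\<dagger>(E\<^sub>c P) = P\<^sup>\<dagger> P\<close> with \<open>|\<lambda>(E\<^sub>c)|\<^sup>2 P\<^sup>\<dagger> P\<close> on a nonzero diagonal entry
  of \<open>P\<^sup>\<dagger> P\<close>.\<close>
lemma lam_pauli_unimodular: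
  assumes c: "c \<in> C"
  shows "cnj (lam (pauli n c)) * lam (pauli n c) = 1"
proof -
  let ?l = "lam (pauli n c)" and ?G = "op_mult n (op_adj n code_proj) code_proj"
  have "op_mult n (op_adj n (op_mult n (pauli n c) code_proj)) (op_mult n (pauli n c) code_proj)
      = op_mult n (op_adj n code_proj)
          (op_mult n (op_mult n (op_adj n (pauli n c)) (pauli n c)) code_proj)"
    by (simp add: op_adj_mult op_mult_assoc)
  then have eq: "op_smult n (cnj ?l * ?l) ?G = ?G"
    by (simp add: pauli_adj_mult_self[OF code_sympl_vecs[OF c]] pauli_mult_code_proj[OF c]
        op_adj_smult op_mult_smult_left op_mult_smult_right mult.commute)
  obtain x y where xy: "x \<in> basis_n" "y \<in> basis_n" "code_proj x y \<noteq> 0"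
    using code_proj_nonzero by blast
  have "?G y y = (\<Sum>z\<in>basis_n. cnj (code_proj z y) * code_proj z y)"
    using xy by (simp add: op_mult_def op_adj_def canon_apply)
  also have "\<dots> = of_real (\<Sum>z\<in>basis_n. (cmod (code_proj z y))\<^sup>2)"
    unfolding of_real_sum complex_norm_square by (simp add: mult.commute)
  finally have "?G y y = of_real (\<Sum>z\<in>basis_n. (cmod (code_proj z y))\<^sup>2)" .
  moreover have "(\<Sum>z\<in>basis_n. (cmod (code_proj z y))\<^sup>2) > 0"
    using xy by (intro sum_pos2[of basis_n x]) auto
  ultimately have "?G y y \<noteq> 0"
    by (metis less_irrefl of_real_eq_0_iff)
  moreover have "(cnj ?l * ?l) * ?G y y = ?G y y"
    using arg_cong[OF eq, of "\<lambda>A. A y y"] xy by (simp add: op_smult_entry)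
  ultimately show ?thesis
    by simp
qed

lemma op_adj_pauli_mult_code_proj:
  assumes c: "c \<in> C"
  shows "op_mult n (op_adj n (pauli n c)) code_proj = op_smult n (inverse (lam (pauli n c))) code_proj"
proof -
  have "op_mult n (op_adj n (pauli n c)) (op_mult n (pauli n c) code_proj) = code_proj"
    by (simp add: pauli_adj_mult_self[OF code_sympl_vecs[OF c]] flip: op_mult_assoc)
  then have "op_smult n (lam (pauli n c)) (op_mult n (op_adj n (pauli n c)) code_proj) = code_proj"
    by (simp add: pauli_mult_code_proj[OF c] op_mult_smult_right)
  then have "op_smult n (inverse (lam (pauli n c)))
      (op_smult n (lam (pauli n c)) (op_mult n (op_adj n (pauli n c)) code_proj))
      = op_smult n (inverse (lam (pauli n c))) code_proj"
    by simp
  then show ?thesis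
    using lam_pauli_nonzero[OF c] by simp
qed

lemma code_proj_hermitian: "op_adj n code_proj = code_proj"
proof -
  have "cnj (inverse (lam (pauli n c))) * inverse (lam (pauli n c)) = 1" if "c \<in> C" for c
    using lam_pauli_unimodular[OF that] lam_pauli_nonzero[OF that]
    by (simp add: field_simps)
  then have "op_sum n (\<lambda>c. op_smult n (cnj (inverse (lam (pauli n c))))
        (op_mult n (op_adj n (pauli n c)) code_proj)) C = op_sum n (\<lambda>c. code_proj) C"
    by (intro op_sum_cong) (simp add: op_adj_pauli_mult_code_proj)
  moreover have "op_mult n (op_adj n code_proj) code_proj = op_smult n (cnj (1 / of_nat (card C)))
      (op_sum n (\<lambda>c. op_smult n (cnj (inverse (lam (pauli n c))))
        (op_mult n (op_adj n (pauli n c)) code_proj)) C)"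
    unfolding code_proj_def op_adj_smult op_adj_sum op_mult_smult_left op_mult_sum_left ..
  ultimately have adj_mult: "op_mult n (op_adj n code_proj) code_proj = code_proj"
    using card_code_pos by (simp add: op_sum_const)
  moreover have "op_adj n (op_mult n (op_adj n code_proj) code_proj)
      = op_mult n (op_adj n code_proj) code_proj"
    by (simp add: op_adj_mult)
  ultimately show ?thesis
    by simp
qed

lemma code_proj_pauli_code_proj:
  "u \<in> C \<Longrightarrow>
   op_mult n code_proj (op_mult n (pauli n u) code_proj) = op_smult n (lam (pauli n u)) code_proj"
  by (simp add: pauli_mult_code_proj op_mult_smult_right code_proj_idem)

text \<open>Some multiple of an element of \<open>C\<close> fails to commute with \<open>E\<^sub>u\<close> by a nontrivial phase.\<close>
lemma code_proj_pauli_code_proj_nondual: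
  assumes uV: "u \<in> sympl_vecs n" and nd: "u \<notin> sympl_dual n C"
  shows "op_mult n code_proj (op_mult n (pauli n u) code_proj) = (\<lambda>x y. 0)"
proof -
  obtain c where c: "c \<in> C" and sc: "sympl_form n c u \<noteq> 0"
    using uV nd by (auto simp: sympl_dual_def)
  obtain s :: 'a where s: "chi s \<noteq> 1"
    using chi_nontrivial by blast
  define c' where "c' = vsmult (- s / sympl_form n c u) c"
  have c': "c' \<in> C"
    using vsmult_in_code[OF c] by (simp add: c'_def)
  have "sympl_form n c' u = - s"
    using sc by (simp add: c'_def sympl_form_vsmult)
  then have swap: "op_mult n (pauli n c') (pauli n u)
      = op_smult n (chi s) (op_mult n (pauli n u) (pauli n c'))"
    using pauli_commutation[OF code_sympl_vecs[OF c'] uV] by simp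
  let ?X = "op_mult n code_proj (op_mult n (pauli n u) code_proj)"
  let ?l = "lam (pauli n c')"
  have "op_smult n ?l ?X
      = op_mult n (op_mult n code_proj (pauli n c')) (op_mult n (pauli n u) code_proj)"
    by (simp add: code_proj_mult_pauli[OF c'] op_mult_smult_left)
  also have "\<dots> = op_mult n code_proj (op_mult n (op_mult n (pauli n c') (pauli n u)) code_proj)"
    by (simp add: op_mult_assoc)
  also have "\<dots> = op_smult n (chi s * ?l) ?X"
    by (simp add: swap op_mult_smult_left op_mult_smult_right op_mult_assoc pauli_mult_code_proj[OF c'])
  finally have eq: "op_smult n ?l ?X = op_smult n (chi s * ?l) ?X" .
  show ?thesis
  proof (rule op_eqI[where n=n])
    fix x y assume "x \<in> basis_n" "y \<in> basis_n"
    then have "(1 - chi s) * ?l * ?X x y = 0"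
      using arg_cong[OF eq, of "\<lambda>A. A x y"] by (simp add: op_smult_entry algebra_simps)
    then show "?X x y = 0"
      using s lam_pauli_nonzero[OF c'] by simp
  qed simp_all
qed

end

section \<open>The erasure channel as a Pauli twirl\<close>

definition vecs_on :: "nat \<Rightarrow> nat set \<Rightarrow> ((nat \<Rightarrow> 'a::zero) \<times> (nat \<Rightarrow> 'a)) set" where
  "vecs_on n J = {u \<in> sympl_vecs n. \<forall>j. j \<notin> J \<longrightarrow> fst u j = 0 \<and> snd u j = 0}"

definition single_site :: "nat \<Rightarrow> 'a \<times> 'a \<Rightarrow> (nat \<Rightarrow> 'a::zero) \<times> (nat \<Rightarrow> 'a)" where
  "single_site j p = (\<lambda>k. if k = j then fst p else 0, \<lambda>k. if k = j then snd p else 0)"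

lemma vecs_on_sympl_vecs: "u \<in> vecs_on n J \<Longrightarrow> u \<in> sympl_vecs n"
  by (simp add: vecs_on_def)

lemma vzero_in_vecs_on: "vzero \<in> vecs_on n J"
  by (simp add: vecs_on_def vzero_def sympl_vecs_def fq_vecs_def)

lemma vecs_on_empty: "vecs_on n {} = {vzero}"
  by (auto simp: vecs_on_def vzero_def prod_eq_iff fun_eq_iff sympl_vecs_def fq_vecs_def)

lemma finite_vecs_on: "finite (vecs_on n J :: ((nat \<Rightarrow> 'a::{finite,zero}) \<times> (nat \<Rightarrow> 'a)) set)"
  using finite_sympl_vecs[of n] by (rule finite_subset[rotated]) (auto simp: vecs_on_def)

lemma card_vecs_on_pos: "card (vecs_on n J :: ((nat \<Rightarrow> 'a::{finite,zero}) \<times> (nat \<Rightarrow> 'a)) set) > 0"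
  using finite_vecs_on[of n J] vzero_in_vecs_on[of n J] by (auto simp: card_gt_0_iff)

lemma vecs_on_closed:
  fixes u v :: "(nat \<Rightarrow> 'a::ab_group_add) \<times> (nat \<Rightarrow> 'a)"
  shows "u \<in> vecs_on n J \<Longrightarrow> v \<in> vecs_on n J \<Longrightarrow> vadd u v \<in> vecs_on n J"
    and "u \<in> vecs_on n J \<Longrightarrow> v \<in> vecs_on n J \<Longrightarrow> vsub u v \<in> vecs_on n J"
  using sympl_vecs_closed[of u n v] by (auto simp: vecs_on_def vadd_def vsub_def)

lemma single_site_sympl_vecs: "j \<in> {1..n} \<Longrightarrow> single_site j p \<in> sympl_vecs n"
  by (auto simp: single_site_def sympl_vecs_def fq_vecs_def)

lemma bij_betw_vecs_on_insert:
  fixes J :: "nat set"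
  assumes j: "j \<in> {1..n}" and jJ: "j \<notin> J"
  shows "bij_betw (\<lambda>(p, u). vadd (single_site j p) u) (UNIV \<times> vecs_on n J)
           (vecs_on n (insert j J) :: ((nat \<Rightarrow> 'a::ab_group_add) \<times> (nat \<Rightarrow> 'a)) set)"
proof (rule bij_betwI[where g = "\<lambda>w. ((fst w j, snd w j),
    (\<lambda>k. if k = j then 0 else fst w k, \<lambda>k. if k = j then 0 else snd w k))"])
  show "(\<lambda>(p, u). vadd (single_site j p) u) \<in> UNIV \<times> vecs_on n J \<rightarrow> vecs_on n (insert j J)"
    using j by (auto simp: vecs_on_def vadd_def single_site_def sympl_vecs_def fq_vecs_def)
qed (use jJ in \<open>auto simp: vecs_on_def vadd_def single_site_def fun_eq_iff prod_eq_iff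
      sympl_vecs_def fq_vecs_def\<close>)

lemma card_vecs_on:
  assumes "finite J" "J \<subseteq> {1..n}"
  shows "card (vecs_on n J :: ((nat \<Rightarrow> 'a::{finite,ab_group_add}) \<times> (nat \<Rightarrow> 'a)) set)
       = CARD('a) ^ (2 * card J)"
  using assms
proof (induction J rule: finite_induct)
  case (insert j J)
  have "j \<in> {1..n}"
    using insert.prems by simp
  then have "card ((UNIV :: ('a \<times> 'a) set) \<times> (vecs_on n J :: ((nat \<Rightarrow> 'a) \<times> (nat \<Rightarrow> 'a)) set))
      = card (vecs_on n (insert j J) :: ((nat \<Rightarrow> 'a) \<times> (nat \<Rightarrow> 'a)) set)"
    using bij_betw_same_card[OF bij_betw_vecs_on_insert] insert.hyps by blast
  then show ?case
    using insert by (simp flip: power_add add: card_cartesian_product power2_eq_square)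
qed (simp add: vecs_on_empty)

lemma depol_at_eq_twirl:
  "depol_at n j X = op_smult n (1 / of_nat CARD('a) ^ 2)
     (op_sum n (\<lambda>p. op_conj n (pauli n (single_site j p)) X) (UNIV :: ('a::{finite,field} \<times> 'a) set))"
proof -
  have "(\<lambda>(a, b). op_mult n (op_mult n (pauli_at n j a b) X) (op_adj n (pauli_at n j a b)))
     = (\<lambda>p. op_conj n (pauli n (single_site j p)) X)"
    by (intro ext) (simp add: split_def pauli_at_def single_site_def op_conj_def)
  then show ?thesis
    by (simp add: depol_at_def)
qed

lemma foldr_depol_at:
  fixes \<rho> :: "'a::{finite,field} qop"
  assumes "distinct js" "set js \<subseteq> {1..n}"
  shows "foldr (depol_at n) js (canon n \<rho>)
       = op_smult n ((1 / of_nat CARD('a) ^ 2) ^ length js)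
           (op_sum n (\<lambda>u. op_conj n (pauli n u) \<rho>) (vecs_on n (set js)))"
  using assms
proof (induction js)
  case Nil
  then show ?case
    by (simp add: vecs_on_empty pauli_vzero op_conj_def)
next
  case (Cons j js)
  let ?J = "set js" and ?q = "1 / of_nat CARD('a) ^ 2 :: complex"
  let ?g = "\<lambda>u. op_conj n (pauli n u) \<rho>"
  have j: "j \<in> {1..n}" and jJ: "j \<notin> ?J"
    using Cons.prems by auto
  have "foldr (depol_at n) (j # js) (canon n \<rho>)
      = depol_at n j (op_smult n (?q ^ length js) (op_sum n ?g (vecs_on n ?J)))"
    using Cons by simp
  also have "\<dots> = op_smult n ?q (op_sum n (\<lambda>p. op_smult n (?q ^ length js)
          (op_sum n (\<lambda>u. ?g (vadd (single_site j p) u)) (vecs_on n ?J))) UNIV)"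
    by (simp add: depol_at_eq_twirl op_conj_smult_right op_conj_sum vecs_on_sympl_vecs
        op_conj_pauli_pauli[OF single_site_sympl_vecs[OF j]] cong: op_sum_cong)
  also have "\<dots> = op_smult n (?q ^ length (j # js))
      (op_sum n (\<lambda>p. op_sum n (\<lambda>u. ?g (vadd (single_site j p) u)) (vecs_on n ?J)) UNIV)"
    by (simp add: op_smult_sum[symmetric] mult.commute)
  also have "op_sum n (\<lambda>p. op_sum n (\<lambda>u. ?g (vadd (single_site j p) u)) (vecs_on n ?J)) UNIV
      = op_sum n (\<lambda>(p, u). ?g (vadd (single_site j p) u)) (UNIV \<times> vecs_on n ?J)"
    by (subst op_sum_Sigma) (auto simp: finite_vecs_on split_def)
  also have "\<dots> = op_sum n ?g (vecs_on n (insert j ?J))"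
    using op_sum_reindex_bij_betw[OF bij_betw_vecs_on_insert[OF j jJ], of n ?g]
    by (simp add: case_prod_beta')
  finally show ?case
    by simp
qed

lemma erasure_channel_eq_twirl:
  fixes \<rho> :: "'a::{finite,field} qop"
  assumes I: "I \<subseteq> {1..n}"
  shows "erasure_channel n I \<rho>
       = op_smult n (1 / of_nat (card (vecs_on n I :: ((nat \<Rightarrow> 'a) \<times> (nat \<Rightarrow> 'a)) set)))
           (op_sum n (\<lambda>u. op_conj n (pauli n u) \<rho>) (vecs_on n I))"
proof -
  have fin: "finite I"
    using I finite_subset by blast
  let ?js = "sorted_list_of_set I"
  have "(1 / of_nat CARD('a) ^ 2 :: complex) ^ length ?js = 1 / of_nat (CARD('a) ^ (2 * card I))"
    using fin by (simp add: power_mult power_one_over)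
  then show ?thesis
    using foldr_depol_at[of ?js n \<rho>] fin I
    by (simp add: erasure_channel_def card_vecs_on)
qed

section \<open>Recovery when the shortenings agree\<close>

locale stabilizer_erasure = stabilizer +
  fixes I :: "nat set"
  assumes I_subset: "I \<subseteq> {1..n}"
begin

abbreviation "V_I \<equiv> (vecs_on n I :: ((nat \<Rightarrow> 'a) \<times> (nat \<Rightarrow> 'a)) set)"

lemma code_proj_mult_outer:
  assumes "\<phi> \<in> stab_code n C lam"
  shows "op_mult n code_proj (outer n \<phi>) = outer n \<phi>"
    and "op_mult n (outer n \<phi>) code_proj = outer n \<phi>"
  using assms unfolding op_mult_outer_left op_mult_outer_right stab_code_iff_code_proj_fixed
  by (simp_all add: code_proj_hermitian outer_def)

lemma op_conj_code_proj_mult_outer: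
  assumes "\<phi> \<in> stab_code n C lam"
  shows "op_conj n (op_mult n code_proj A) (outer n \<phi>)
       = op_conj n (op_mult n code_proj (op_mult n A code_proj)) (outer n \<phi>)"
proof -
  have "op_conj n (op_mult n code_proj A) (outer n \<phi>)
      = op_conj n (op_mult n code_proj A) (op_mult n code_proj (op_mult n (outer n \<phi>) code_proj))"
    using code_proj_mult_outer[OF assms] by (simp add: op_mult_assoc[symmetric])
  then show ?thesis
    by (simp add: op_conj_def op_adj_mult code_proj_hermitian op_mult_assoc)
qed

end

locale shortenings_agree = stabilizer_erasure +
  assumes dual_on_I_in_code: "\<And>w. w \<in> V_I \<Longrightarrow> w \<in> sympl_dual n C \<Longrightarrow> w \<in> C"
begin

lemma code_proj_pauli_code_proj_on_I:
  assumes w: "w \<in> V_I"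
  shows "op_mult n code_proj (op_mult n (pauli n w) code_proj)
       = op_smult n (if w \<in> C then lam (pauli n w) else 0) code_proj"
  using code_proj_pauli_code_proj code_proj_pauli_code_proj_nondual[OF vecs_on_sympl_vecs[OF w]]
    dual_on_I_in_code[OF w]
  by (cases "w \<in> C") auto

definition card_code_on_I :: nat where
  "card_code_on_I = card (C \<inter> V_I)"

lemma card_code_on_I_pos: "card_code_on_I > 0"
  using vzero_in_code vzero_in_vecs_on finite_code by (auto simp: card_code_on_I_def card_gt_0_iff)

lemma card_code_translates: "g \<in> V_I \<Longrightarrow> card {e \<in> V_I. vsub g e \<in> C} = card_code_on_I"
  unfolding card_code_on_I_def
  by (rule bij_betw_same_card[where f = "vsub g"], rule bij_betwI[where g = "vsub g"])
    (auto simp: vecs_on_closed)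

text \<open>The projector onto the span of the corrupted code spaces \<open>E\<^sub>e Q(C)\<close>, \<open>e \<in> V\<^sub>I\<close>.\<close>
definition corrupted_proj :: "'a qop" where
  "corrupted_proj = op_smult n (1 / of_nat card_code_on_I)
     (op_sum n (\<lambda>e. op_conj n (pauli n e) code_proj) V_I)"

lemma canonical_op_corrupted_proj [simp]: "canonical_op n corrupted_proj"
  by (simp add: corrupted_proj_def)

lemma op_conj_pauli_code_proj_mult:
  assumes e: "e \<in> V_I" and g: "g \<in> V_I"
  shows "op_mult n (op_conj n (pauli n e) code_proj) (op_mult n (pauli n g) code_proj)
       = (if vsub g e \<in> C then op_mult n (pauli n g) code_proj else (\<lambda>x y. 0))"
proof -
  let ?w = "vsub g e" and ?\<alpha> = "cnj (chi (dot n (snd e) (fst (vsub g e))))"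
  have adj: "op_mult n (op_adj n (pauli n e)) (pauli n g) = op_smult n ?\<alpha> (pauli n ?w)"
    by (rule pauli_adj_mult[OF vecs_on_sympl_vecs[OF e] vecs_on_sympl_vecs[OF g]])
  have w: "?w \<in> V_I"
    using g e by (rule vecs_on_closed(2))
  have "op_mult n (op_conj n (pauli n e) code_proj) (op_mult n (pauli n g) code_proj)
      = op_mult n (pauli n e) (op_mult n code_proj
          (op_mult n (op_mult n (op_adj n (pauli n e)) (pauli n g)) code_proj))"
    by (simp add: op_conj_def op_mult_assoc)
  also have "\<dots> = op_smult n (?\<alpha> * (if ?w \<in> C then lam (pauli n ?w) else 0))
      (op_mult n (pauli n e) code_proj)"
    by (simp add: adj op_mult_smult_left op_mult_smult_right code_proj_pauli_code_proj_on_I[OF w])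
  also have "\<dots> = (if ?w \<in> C then op_mult n (pauli n g) code_proj else (\<lambda>x y. 0))"
  proof (cases "?w \<in> C")
    case True
    have "op_mult n (pauli n g) code_proj
        = op_mult n (op_mult n (pauli n e) (op_mult n (op_adj n (pauli n e)) (pauli n g))) code_proj"
      by (simp add: pauli_mult_adj_self[OF vecs_on_sympl_vecs[OF e]] flip: op_mult_assoc)
    also have "\<dots> = op_smult n (?\<alpha> * lam (pauli n ?w)) (op_mult n (pauli n e) code_proj)"
      by (simp add: adj op_mult_smult_left op_mult_smult_right op_mult_assoc
          pauli_mult_code_proj[OF True])
    finally show ?thesis
      using True by simp
  qed simp
  finally show ?thesis .
qed

lemma corrupted_proj_mult_pauli_code_proj:
  assumes g: "g \<in> V_I"
  shows "op_mult n corrupted_proj (op_mult n (pauli n g) code_proj) = op_mult n (pauli n g) code_proj"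
proof -
  have "op_mult n corrupted_proj (op_mult n (pauli n g) code_proj)
      = op_smult n (1 / of_nat card_code_on_I) (op_sum n
          (\<lambda>e. if vsub g e \<in> C then op_mult n (pauli n g) code_proj else (\<lambda>x y. 0)) V_I)"
    unfolding corrupted_proj_def op_mult_smult_left op_mult_sum_left
    by (intro arg_cong[where f = "op_smult n _"] op_sum_cong) (simp add: op_conj_pauli_code_proj_mult g)
  then show ?thesis
    using card_code_on_I_pos by (simp add: op_sum_indicator finite_vecs_on card_code_translates[OF g])
qed

lemma corrupted_proj_hermitian: "op_adj n corrupted_proj = corrupted_proj"
  by (simp add: corrupted_proj_def op_adj_smult op_adj_sum op_adj_conj code_proj_hermitian)

lemma corrupted_proj_idem: "op_mult n corrupted_proj corrupted_proj = corrupted_proj"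
proof -
  have "op_mult n corrupted_proj (op_conj n (pauli n e) code_proj) = op_conj n (pauli n e) code_proj"
    if "e \<in> V_I" for e
    using corrupted_proj_mult_pauli_code_proj[OF that] by (simp add: op_conj_def flip: op_mult_assoc)
  then show ?thesis
    unfolding corrupted_proj_def op_mult_smult_right op_mult_sum_right
    by (simp add: corrupted_proj_def[symmetric] cong: op_sum_cong)
qed

definition complement_proj :: "'a qop" where
  "complement_proj = op_add n (op_id n) (op_smult n (-1) corrupted_proj)"

lemma complement_proj_adj_mult: "op_mult n (op_adj n complement_proj) complement_proj = complement_proj"
proof -
  have "op_mult n corrupted_proj complement_proj = (\<lambda>x y. 0)"
    by (simp add: complement_proj_def op_mult_add_right op_mult_smult_right corrupted_proj_idem
        op_add_neg_self)
  then have "op_mult n complement_proj complement_proj = complement_proj"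
    by (simp add: complement_proj_def op_mult_add_left op_mult_smult_left)
  then show ?thesis
    by (simp add: complement_proj_def op_adj_add op_adj_smult corrupted_proj_hermitian)
qed

lemma complement_proj_add_corrupted_proj: "op_add n complement_proj corrupted_proj = op_id n"
  by (rule op_eqI[where n=n])
    (simp_all add: complement_proj_def op_add_def op_smult_entry op_id_def canon_apply)

lemma complement_proj_mult_pauli_code_proj:
  "g \<in> V_I \<Longrightarrow> op_mult n complement_proj (op_mult n (pauli n g) code_proj) = (\<lambda>x y. 0)"
  by (simp add: complement_proj_def op_mult_add_left op_mult_smult_left
      corrupted_proj_mult_pauli_code_proj op_add_neg_self)

definition kraus_scale :: complex where
  "kraus_scale = of_real (1 / sqrt (real card_code_on_I))"

lemma kraus_scale_mult_cnj: "kraus_scale * cnj kraus_scale = 1 / of_nat card_code_on_I"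
  using card_code_on_I_pos by (simp add: kraus_scale_def flip: of_real_mult)

definition kraus_on :: "(nat \<Rightarrow> 'a) \<times> (nat \<Rightarrow> 'a) \<Rightarrow> 'a qop" where
  "kraus_on e = op_smult n kraus_scale (op_mult n code_proj (op_adj n (pauli n e)))"

lemma kraus_on_adj_mult:
  "op_mult n (op_adj n (kraus_on e)) (kraus_on e)
   = op_smult n (1 / of_nat card_code_on_I) (op_conj n (pauli n e) code_proj)"
proof -
  have "op_mult n (op_adj n (kraus_on e)) (kraus_on e) = op_smult n (kraus_scale * cnj kraus_scale)
      (op_mult n (pauli n e) (op_mult n (op_mult n code_proj code_proj) (op_adj n (pauli n e))))"
    by (simp add: kraus_on_def op_adj_smult op_adj_mult code_proj_hermitian op_mult_smult_left
        op_mult_smult_right op_mult_assoc)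
  then show ?thesis
    by (simp add: kraus_scale_mult_cnj code_proj_idem op_conj_def op_mult_assoc)
qed

definition error_list :: "((nat \<Rightarrow> 'a) \<times> (nat \<Rightarrow> 'a)) list" where
  "error_list = (SOME es. distinct es \<and> set es = V_I)"

lemma distinct_set_error_list: "distinct error_list" "set error_list = V_I"
proof -
  have "\<exists>es. distinct es \<and> set es = V_I"
    using finite_distinct_list[OF finite_vecs_on] by blast
  then show "distinct error_list" "set error_list = V_I"
    unfolding error_list_def by (metis (mono_tags, lifting) someI_ex)+
qed

definition recovery :: "'a qop list" where
  "recovery = complement_proj # map kraus_on error_list"

lemma kraus_apply_recovery:
  "kraus_apply n recovery \<rho>
   = op_add n (op_conj n complement_proj \<rho>) (op_sum n (\<lambda>e. op_conj n (kraus_on e) \<rho>) V_I)"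
  using op_sum_Cons_map[OF distinct_set_error_list(1), of n "\<lambda>K. op_conj n K \<rho>"
      complement_proj kraus_on] distinct_set_error_list(2)
  by (simp add: kraus_apply_def recovery_def op_conj_def)

lemma kraus_tp_recovery: "kraus_tp n recovery"
proof -
  have "op_sum n (\<lambda>i. op_mult n (op_adj n (recovery ! i)) (recovery ! i)) {..<length recovery}
      = op_add n (op_mult n (op_adj n complement_proj) complement_proj)
          (op_sum n (\<lambda>e. op_mult n (op_adj n (kraus_on e)) (kraus_on e)) V_I)"
    unfolding recovery_def
    using op_sum_Cons_map[OF distinct_set_error_list(1), of n "\<lambda>K. op_mult n (op_adj n K) K"
        complement_proj kraus_on] distinct_set_error_list(2)
    by simp
  also have "\<dots> = op_add n complement_proj corrupted_proj"
    by (simp add: complement_proj_adj_mult kraus_on_adj_mult corrupted_proj_def op_smult_sum)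
  finally show ?thesis
    by (simp add: kraus_tp_def complement_proj_add_corrupted_proj)
qed

lemma kraus_on_recovers:
  assumes \<phi>: "\<phi> \<in> stab_code n C lam" and e: "e \<in> V_I" and g: "g \<in> V_I"
  shows "op_conj n (kraus_on e) (op_conj n (pauli n g) (outer n \<phi>))
       = (if vsub g e \<in> C then op_smult n (1 / of_nat card_code_on_I) (outer n \<phi>) else (\<lambda>x y. 0))"
proof -
  let ?w = "vsub g e" and ?\<alpha> = "cnj (chi (dot n (snd e) (fst (vsub g e))))"
  let ?\<gamma> = "if ?w \<in> C then lam (pauli n ?w) else 0"
  have w: "?w \<in> V_I"
    using g e by (rule vecs_on_closed(2))
  have "op_mult n (kraus_on e) (pauli n g)
      = op_smult n kraus_scale (op_mult n code_proj (op_mult n (op_adj n (pauli n e)) (pauli n g)))"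
    by (simp add: kraus_on_def op_mult_smult_left op_mult_assoc)
  also have "\<dots> = op_smult n (kraus_scale * ?\<alpha>) (op_mult n code_proj (pauli n ?w))"
    by (simp add: pauli_adj_mult[OF vecs_on_sympl_vecs[OF e] vecs_on_sympl_vecs[OF g]]
        op_mult_smult_right)
  finally have "op_mult n (kraus_on e) (pauli n g)
      = op_smult n (kraus_scale * ?\<alpha>) (op_mult n code_proj (pauli n ?w))" .
  then have "op_conj n (kraus_on e) (op_conj n (pauli n g) (outer n \<phi>))
      = op_smult n (kraus_scale * ?\<alpha> * cnj (kraus_scale * ?\<alpha>))
          (op_conj n (op_mult n code_proj (pauli n ?w)) (outer n \<phi>))"
    by (simp only: op_conj_mult[symmetric] op_conj_smult_left)
  also have "op_conj n (op_mult n code_proj (pauli n ?w)) (outer n \<phi>)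
      = op_conj n (op_mult n code_proj (op_mult n (pauli n ?w) code_proj)) (outer n \<phi>)"
    by (rule op_conj_code_proj_mult_outer[OF \<phi>])
  also have "\<dots> = op_smult n (?\<gamma> * cnj ?\<gamma>) (op_conj n code_proj (outer n \<phi>))"
    by (simp only: code_proj_pauli_code_proj_on_I[OF w] op_conj_smult_left)
  also have "op_conj n code_proj (outer n \<phi>) = outer n \<phi>"
    using code_proj_mult_outer[OF \<phi>] by (simp add: op_conj_def code_proj_hermitian)
  also have "kraus_scale * ?\<alpha> * cnj (kraus_scale * ?\<alpha>) = 1 / of_nat card_code_on_I"
    using kraus_scale_mult_cnj by (simp add: mult_ac)
  also have "?\<gamma> * cnj ?\<gamma> = (if ?w \<in> C then 1 else 0)"
    using lam_pauli_unimodular[of ?w] by (simp add: mult.commute)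
  finally show ?thesis
    by (simp add: mult.commute)
qed

text \<open>Each corrupted state \<open>E\<^sub>g \<rho> E\<^sub>g\<^sup>\<dagger>\<close> is restored: \<open>complement_proj\<close> annihilates it,
  and exactly the \<open>card_code_on_I\<close> Kraus operators \<open>kraus_on e\<close> with \<open>g - e \<in> C\<close> return
  equal shares of \<open>\<rho>\<close>.\<close>
lemma recovery_pauli_conj:
  assumes \<phi>: "\<phi> \<in> stab_code n C lam" and g: "g \<in> V_I"
  shows "kraus_apply n recovery (op_conj n (pauli n g) (outer n \<phi>)) = outer n \<phi>"
proof -
  have "op_conj n complement_proj (op_conj n (pauli n g) (outer n \<phi>)) = (\<lambda>x y. 0)"
  proof -
    have "op_mult n (op_mult n complement_proj (pauli n g)) (outer n \<phi>)
        = op_mult n (op_mult n complement_proj (op_mult n (pauli n g) code_proj)) (outer n \<phi>)"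
      using code_proj_mult_outer[OF \<phi>] by (simp add: op_mult_assoc)
    then have "op_mult n (op_mult n complement_proj (pauli n g)) (outer n \<phi>) = (\<lambda>x y. 0)"
      by (simp add: complement_proj_mult_pauli_code_proj[OF g])
    moreover have "op_conj n complement_proj (op_conj n (pauli n g) (outer n \<phi>))
        = op_conj n (op_mult n complement_proj (pauli n g)) (outer n \<phi>)"
      by (rule op_conj_mult[symmetric])
    ultimately show ?thesis
      by (simp add: op_conj_def)
  qed
  then have "kraus_apply n recovery (op_conj n (pauli n g) (outer n \<phi>))
      = op_sum n (\<lambda>e. if vsub g e \<in> C then op_smult n (1 / of_nat card_code_on_I) (outer n \<phi>)
          else (\<lambda>x y. 0)) V_I"
    by (simp add: kraus_apply_recovery kraus_on_recovers[OF \<phi> _ g] cong: op_sum_cong)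
  then show ?thesis
    using card_code_on_I_pos by (simp add: op_sum_indicator finite_vecs_on card_code_translates[OF g])
qed

lemma corrects_erasures: "corrects_erasures n (stab_code n C lam) I"
  unfolding corrects_erasures_def
proof (intro exI conjI ballI)
  show "kraus_tp n recovery"
    by (rule kraus_tp_recovery)
  fix \<phi> assume \<phi>: "\<phi> \<in> stab_code n C lam"
  have "kraus_apply n recovery (erasure_channel n I (outer n \<phi>))
      = op_smult n (1 / of_nat (card V_I)) (op_sum n (\<lambda>g. outer n \<phi>) V_I)"
    by (simp add: erasure_channel_eq_twirl[OF I_subset] kraus_apply_smult kraus_apply_sum
        recovery_pauli_conj[OF \<phi>] cong: op_sum_cong)
  then show "kraus_apply n recovery (erasure_channel n I (outer n \<phi>)) = outer n \<phi>"
    using card_vecs_on_pos[of n I, where 'a='a] by (simp add: op_sum_const)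
qed

end

section \<open>Necessity\<close>

lemma shorten_eq_supported:
  "shorten I D = {y \<in> D. \<forall>j. j \<notin> I \<longrightarrow> fst y j = 0 \<and> snd y j = 0}"
proof -
  have supp: "{j. fst y j \<noteq> 0} \<union> {j. snd y j \<noteq> 0} \<subseteq> I \<longleftrightarrow> (\<forall>j. j \<notin> I \<longrightarrow> fst y j = 0 \<and> snd y j = 0)"
    for y :: "(nat \<Rightarrow> 'a::zero) \<times> (nat \<Rightarrow> 'a)"
    by auto
  have proj: "proj I y = y" if "\<forall>j. j \<notin> I \<longrightarrow> fst y j = 0 \<and> snd y j = 0"
    for y :: "(nat \<Rightarrow> 'a) \<times> (nat \<Rightarrow> 'a)"
    using that by (auto simp: proj_def fun_eq_iff prod_eq_iff)
  show ?thesis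
    unfolding shorten_def supp
  proof (intro set_eqI iffI)
    fix x assume "x \<in> {proj I y |y. y \<in> D \<and> (\<forall>j. j \<notin> I \<longrightarrow> fst y j = 0 \<and> snd y j = 0)}"
    then show "x \<in> {y \<in> D. \<forall>j. j \<notin> I \<longrightarrow> fst y j = 0 \<and> snd y j = 0}"
      using proj by auto
  next
    fix x assume x: "x \<in> {y \<in> D. \<forall>j. j \<notin> I \<longrightarrow> fst y j = 0 \<and> snd y j = 0}"
    then have "x = proj I x"
      using proj[of x] by simp
    with x show "x \<in> {proj I y |y. y \<in> D \<and> (\<forall>j. j \<notin> I \<longrightarrow> fst y j = 0 \<and> snd y j = 0)}"
      by blast
  qed
qed


lemma cnj_polarization:
  fixes P Q R S p q r s :: complex
  assumes "P * cnj R = p * cnj r" and "Q * cnj S = q * cnj s"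
    and "(P + Q) * cnj (R + S) = (p + q) * cnj (r + s)"
    and "(P + \<i> * Q) * cnj (R + \<i> * S) = (p + \<i> * q) * cnj (r + \<i> * s)"
  shows "P * cnj S = p * cnj s"
proof -
  have sum: "P * cnj S + Q * cnj R = p * cnj s + q * cnj r"
    using assms(1-3) by (simp add: algebra_simps)
  have "\<i> * (Q * cnj R - P * cnj S) = \<i> * (q * cnj r - p * cnj s)"
    using assms(1,2,4) by (simp add: algebra_simps)
  then have "Q * cnj R - P * cnj S = q * cnj r - p * cnj s"
    by simp
  with sum have "(P * cnj S + Q * cnj R) - (Q * cnj R - P * cnj S)
      = (p * cnj s + q * cnj r) - (q * cnj r - p * cnj s)"
    by simp
  then have "2 * (P * cnj S) = 2 * (p * cnj s)"
    by (simp add: algebra_simps mult_2)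
  then show ?thesis
    by simp
qed

context stabilizer
begin

lemma stab_code_add:
  "v \<in> stab_code n C lam \<Longrightarrow> w \<in> stab_code n C lam \<Longrightarrow> (\<lambda>x. v x + w x) \<in> stab_code n C lam"
  by (simp add: stab_code_iff_code_proj_fixed op_apply_add qvecs_def)

lemma stab_code_scale: "v \<in> stab_code n C lam \<Longrightarrow> (\<lambda>x. c * v x) \<in> stab_code n C lam"
  by (simp add: stab_code_iff_code_proj_fixed op_apply_scale qvecs_def)

lemma pauli_dual_stab_code:
  assumes "u \<in> sympl_dual n C" "\<phi> \<in> stab_code n C lam"
  shows "op_apply n (pauli n u) \<phi> \<in> stab_code n C lam"
proof -
  have "op_apply n code_proj (op_apply n (pauli n u) \<phi>)
      = op_apply n (op_mult n (pauli n u) code_proj) \<phi>"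
    by (simp add: op_apply_mult pauli_dual_commute_code_proj[OF assms(1)])
  also have "\<dots> = op_apply n (pauli n u) \<phi>"
    using assms(2) by (simp add: op_apply_mult stab_code_iff_code_proj_fixed)
  finally show ?thesis
    by (simp add: stab_code_iff_code_proj_fixed op_apply_qvecs)
qed

lemma code_proj_column_stab_code: "(\<lambda>x. code_proj x w) \<in> stab_code n C lam"
proof -
  have "op_apply n code_proj (\<lambda>x. code_proj x w) x = code_proj x w" for x
  proof (cases "x \<in> basis_n \<and> w \<in> basis_n")
    case True
    then have "op_apply n code_proj (\<lambda>x. code_proj x w) x = op_mult n code_proj code_proj x w"
      by (simp add: op_apply_def op_mult_def canon_apply)
    then show ?thesis
      by (simp add: code_proj_idem)
  next
    case False
    then show ?thesis
      using canonical_op_outside[OF canonical_op_code_proj] by (auto simp: op_apply_def)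
  qed
  moreover have "(\<lambda>x. code_proj x w) \<in> qvecs n"
    using canonical_op_outside[OF canonical_op_code_proj] by (auto simp: qvecs_def)
  ultimately show ?thesis
    by (simp add: stab_code_iff_code_proj_fixed fun_eq_iff)
qed

lemma outer_preserved_polarization:
  assumes same: "\<And>\<phi>. \<phi> \<in> stab_code n C lam \<Longrightarrow> outer n (op_apply n A \<phi>) = outer n \<phi>"
    and v: "v \<in> stab_code n C lam" and w: "w \<in> stab_code n C lam"
    and xy: "x \<in> basis_n" "y \<in> basis_n"
  shows "op_apply n A v x * cnj (op_apply n A w y) = v x * cnj (w y)"
proof -
  have diag: "op_apply n A \<phi> x * cnj (op_apply n A \<phi> y) = \<phi> x * cnj (\<phi> y)"
    if "\<phi> \<in> stab_code n C lam" for \<phi>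
    using same[OF that] outer_entry[OF xy, of "op_apply n A \<phi>"] outer_entry[OF xy, of \<phi>] by simp
  show ?thesis
  proof (rule cnj_polarization)
    show "op_apply n A v x * cnj (op_apply n A v y) = v x * cnj (v y)"
      and "op_apply n A w x * cnj (op_apply n A w y) = w x * cnj (w y)"
      using diag v w by auto
    show "(op_apply n A v x + op_apply n A w x) * cnj (op_apply n A v y + op_apply n A w y)
        = (v x + w x) * cnj (v y + w y)"
      using diag[OF stab_code_add[OF v w]] by (simp add: op_apply_add)
    show "(op_apply n A v x + \<i> * op_apply n A w x) * cnj (op_apply n A v y + \<i> * op_apply n A w y)
        = (v x + \<i> * w x) * cnj (v y + \<i> * w y)"
      using diag[OF stab_code_add[OF v stab_code_scale[OF w, of \<i>]]]
      by (simp add: op_apply_add op_apply_scale)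
  qed
qed

text \<open>Polarization applied to the columns of \<open>P\<close>, which lie in \<open>Q(C)\<close>, shows that \<open>E\<^sub>u P\<close> and \<open>P\<close>
  have proportional entries.\<close>
lemma pauli_mult_code_proj_scalar:
  assumes same: "\<And>\<phi>. \<phi> \<in> stab_code n C lam \<Longrightarrow> outer n (op_apply n (pauli n u) \<phi>) = outer n \<phi>"
  shows "\<exists>\<gamma>. op_mult n (pauli n u) code_proj = op_smult n \<gamma> code_proj"
proof -
  let ?M = "op_mult n (pauli n u) code_proj"
  have M: "?M x w * cnj (?M y v) = code_proj x w * cnj (code_proj y v)"
    if "x \<in> basis_n" "w \<in> basis_n" "y \<in> basis_n" "v \<in> basis_n" for x w y v
    using outer_preserved_polarization[OF same code_proj_column_stab_code code_proj_column_stab_code,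
        of x y w v] that
    by (simp add: op_apply_def op_mult_def canon_apply)
  obtain y0 v0 where y0: "y0 \<in> basis_n" and v0: "v0 \<in> basis_n" and nz: "code_proj y0 v0 \<noteq> 0"
    using code_proj_nonzero by blast
  have "?M y0 v0 \<noteq> 0"
    using M[OF y0 v0 y0 v0] nz by auto
  have "?M = op_smult n (cnj (code_proj y0 v0) / cnj (?M y0 v0)) code_proj"
  proof (rule op_eqI[where n=n])
    fix x w assume xw: "x \<in> basis_n" "w \<in> basis_n"
    then have "?M x w = code_proj x w * cnj (code_proj y0 v0) / cnj (?M y0 v0)"
      using M[OF _ _ y0 v0] \<open>?M y0 v0 \<noteq> 0\<close> by (simp add: field_simps)
    then show "?M x w = op_smult n (cnj (code_proj y0 v0) / cnj (?M y0 v0)) code_proj x w"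
      using xw by (simp add: op_smult_entry)
  qed simp_all
  then show ?thesis
    by blast
qed

text \<open>The trace of \<open>E\<^sub>u\<^sup>\<dagger> E\<^sub>u P = P\<close> is nonzero, while \<open>E\<^sub>u\<^sup>\<dagger> P\<close> is traceless for \<open>u \<notin> C\<close>.\<close>
lemma pauli_mult_code_proj_not_scalar:
  assumes u: "u \<in> sympl_vecs n" and "u \<notin> C"
  shows "op_mult n (pauli n u) code_proj \<noteq> op_smult n \<gamma> code_proj"
proof
  assume M: "op_mult n (pauli n u) code_proj = op_smult n \<gamma> code_proj"
  have "op_trace n (op_mult n (op_adj n (pauli n u)) (pauli n c)) = 0" if c: "c \<in> C" for c
  proof -
    have "vsub c u \<noteq> vzero"
      using c \<open>u \<notin> C\<close> by (auto simp: vsub_eq_vzero_iff)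
    then show ?thesis
      using pauli_adj_mult[OF u code_sympl_vecs[OF c]]
        op_trace_pauli[OF sympl_vecs_closed(2)[OF code_sympl_vecs[OF c] u]]
      by (simp add: op_trace_smult)
  qed
  then have "op_trace n (op_mult n (op_adj n (pauli n u)) code_proj) = 0"
    by (simp add: code_proj_def op_mult_smult_right op_mult_sum_right op_trace_smult op_trace_sum)
  moreover have "op_trace n code_proj
      = op_trace n (op_mult n (op_adj n (pauli n u)) (op_mult n (pauli n u) code_proj))"
    by (simp add: pauli_adj_mult_self[OF u] flip: op_mult_assoc)
  ultimately have "op_trace n code_proj = 0"
    by (simp add: M op_mult_smult_right op_trace_smult)
  then show False
    using op_trace_code_proj card_basis_idx_pos[of n, where 'a='a] card_code_pos by simp
qed

end

context stabilizer_erasure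
begin

lemma erasure_channel_conj_pauli:
  assumes L: "L \<in> V_I"
  shows "erasure_channel n I (op_conj n (pauli n L) X) = erasure_channel n I X"
proof -
  have "bij_betw (\<lambda>g. vadd g L) V_I V_I"
    by (rule bij_betwI[where g = "\<lambda>g. vsub g L"])
      (use L in \<open>auto intro: vecs_on_closed\<close>)
  then have "op_sum n (\<lambda>g. op_conj n (pauli n (vadd g L)) X) V_I
      = op_sum n (\<lambda>g. op_conj n (pauli n g) X) V_I"
    by (rule op_sum_reindex_bij_betw)
  then show ?thesis
    using L by (simp add: erasure_channel_eq_twirl[OF I_subset] vecs_on_sympl_vecs
        op_conj_pauli_pauli cong: op_sum_cong)
qed

text \<open>A recovery map cannot tell \<open>\<rho>\<close> from \<open>E\<^sub>L \<rho> E\<^sub>L\<^sup>\<dagger>\<close>, since the channel absorbs \<open>E\<^sub>L\<close>.\<close>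
lemma outer_pauli_eq_if_corrects:
  assumes corr: "corrects_erasures n (stab_code n C lam) I"
    and L: "L \<in> V_I" "L \<in> sympl_dual n C" and \<phi>: "\<phi> \<in> stab_code n C lam"
  shows "outer n (op_apply n (pauli n L) \<phi>) = outer n \<phi>"
proof -
  obtain Ks where rec: "\<And>\<psi>. \<psi> \<in> stab_code n C lam \<Longrightarrow>
      kraus_apply n Ks (erasure_channel n I (outer n \<psi>)) = outer n \<psi>"
    using corr unfolding corrects_erasures_def by blast
  have "outer n (op_apply n (pauli n L) \<phi>) = kraus_apply n Ks (erasure_channel n I (outer n \<phi>))"
    using rec[OF pauli_dual_stab_code[OF L(2) \<phi>]] erasure_channel_conj_pauli[OF L(1)]
    by (simp add: outer_op_apply)
  then show ?thesis
    using rec[OF \<phi>] by simp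
qed

lemma corrects_erasures_iff_shorten_eq:
  "corrects_erasures n (stab_code n C lam) I \<longleftrightarrow> shorten I C = shorten I (sympl_dual n C)"
proof
  assume corr: "corrects_erasures n (stab_code n C lam) I"
  have "L \<in> C" if L: "L \<in> V_I" "L \<in> sympl_dual n C" for L
    using pauli_mult_code_proj_scalar[OF outer_pauli_eq_if_corrects[OF corr L]]
      pauli_mult_code_proj_not_scalar[OF vecs_on_sympl_vecs[OF L(1)]] by blast
  then show "shorten I C = shorten I (sympl_dual n C)"
    using code_in_dual by (auto simp: shorten_eq_supported vecs_on_def sympl_dual_def)
next
  assume eq: "shorten I C = shorten I (sympl_dual n C)"
  interpret shortenings_agree n C lam I
  proof
    fix w assume "w \<in> V_I" "w \<in> sympl_dual n C"
    then have "w \<in> shorten I (sympl_dual n C)"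
      by (auto simp: shorten_eq_supported vecs_on_def)
    then show "w \<in> C"
      unfolding eq[symmetric] by (simp add: shorten_eq_supported)
  qed
  show "corrects_erasures n (stab_code n C lam) I"
    by (rule corrects_erasures)
qed

end

theorem theorem11:
  fixes n :: nat
    and C :: "((nat \<Rightarrow> 'a::{finite,field}) \<times> (nat \<Rightarrow> 'a)) set"
    and lam :: "'a qop \<Rightarrow> complex"
    and I :: "nat set"
  assumes "linear_code n C"
    and "sympl_self_orth n C"
    and "stab_character n C lam"
    and "I \<subset> {1..n}"
  shows "corrects_erasures n (stab_code n C lam) I \<longleftrightarrow>
         shorten I C = shorten I (sympl_dual n C)"
proof -
  interpret stabilizer_erasure n C lam I
    using assms by unfold_locales auto
  show ?thesis
    by (rule corrects_erasures_iff_shorten_eq)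
qed

end
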